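(* Let $N\ge 2$ and let $F$ be a marginal distribution on $[0,1]$ as described in the context. Suppose the general robust-version regularity conditions (I) hold: $$f(x)\ \ge\ \frac{x^{-1-\frac{N}{N-1}}}{N-1}\int_0^x s^{\frac{N}{N-1}}f(s)\,ds\quad\text{for all }x\in(0,1),\qquad \Pr(1)\ \ge\ \frac{1}{N-1}\int_{(0,1)}s^{\frac{N}{N-1}}f(s)\,ds.$$ Then the Second Price Auction with $\mathrm{Beta}(\frac{1}{N-1},1)$ Distributed Reserves $(q^*,t^* )$ and the General Adversarial Correlation Structure $\pi^*$ form a Nash equilibrium (saddle point) of the zero-sum game in which the auctioneer chooses an exclusive DSIC and EPIR mechanism and Nature chooses $\pi\in\Pi(F)$: $\pi^*\in\Pi(F)$ and $U((q^*,t^* ),\pi)\ge U((q^*,t^* ),\pi^* )\ge U((q,t),\pi^* )$ for every $\pi\in\Pi(F)$ and every exclusive DSIC and EPIR mechanism $(q,t)$. The revenue guarantee $\inf_{\pi\in\Pi(F)}U((q^*,t^* ),\pi)$ equals $E[X^{\frac{N}{N-1}}]$ with $X\sim F$. In addition, the general robust-version regularity conditions (II) — namely $x^2f(x)$ is non-decreasing on $(0,1)$ and $\Pr(1)\ge\frac{1}{N-1}\int_{(0,1)}s^{\frac{N}{N-1}}f(s)\,ds$ — imply the general robust-version regularity conditions (I).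
   Context: A single indivisible good is sold to $N$ risk-neutral bidders $I=\{1,\dots,N\}$ with private values $v_i\in[0,1]$. All bidders' values have the same marginal cdf $F$ on $[0,1]$ with support $[0,1]$; $F$ may have point masses at $0$ and at $1$ and is absolutely continuous on $(0,1)$ with density $f$; $\Pr(1)$ is the mass of $F$ at $1$ (if $F$ has a mass at $0$, $f(0)$ denotes $\Pr(0)$). $\Pi(F)$ is the set of Borel probability measures on $[0,1]^N$ all of whose one-dimensional marginals equal $F$. A mechanism $(q,t)$ consists of $q:[0,1]^N\to[0,1]^N$ with $\sum_iq_i(v)\le1$ and $t:[0,1]^N\to\mathbb{R}^N$; it is DSIC if $v_iq_i(v)-t_i(v)\ge v_iq_i(v_i',v_{-i})-t_i(v_i',v_{-i})$ for all $i,v,v_i'$, EPIR if $v_iq_i(v)-t_i(v)\ge0$ for all $i,v$, and exclusive if $q_i(v)=0$ whenever $v_i<\max_jv_j$. $U((q,t),\pi)=\int\sum_it_i(v)\,d\pi(v)$. For a profile $v$, $v_{(1)}$ and $v_{(2)}$ denote the highest and second highest entries. Second Price Auction with $\mathrm{Beta}(\frac1{N-1},1)$ Distributed Reserves $(q^*,t^* )$: if exactly one bidder $i$ has $v_i=v_{(1)}$, then $q_i^*(v)=v_{(1)}^{\frac1{N-1}}$, $t_i^*(v)=\frac1Nv_{(1)}^{\frac N{N-1}}+\frac{N-1}Nv_{(2)}^{\frac N{N-1}}$, and $q_j^*=t_j^*=0$ for $j\ne i$; if $K\ge2$ bidders have value $v_{(1)}$, each of them gets $q_i^*(v)=\frac{v_{(1)}^{1/(N-1)}}{K}$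 and pays $t_i^*(v)=\frac1Kv_{(1)}^{\frac N{N-1}}$, and all others get and pay $0$. General Adversarial Correlation Structure $\pi^*$: a symmetric distribution supported on $V^+$, the set of profiles in which either all coordinates are equal, or there is a unique highest coordinate and all other coordinates are equal. It places weight $f(0)$ at $(0,\dots,0)$; for each $i$, on the profiles with $v_i=v_{(1)}\in(0,1)$ and $v_j=v_{(2)}\in(0,v_{(1)}]$ for all $j\neq i$, it has density (w.r.t. Lebesgue measure in the two parameters $(v_{(1)},v_{(2)})$) $\frac{1}{(N-1)v_{(1)}^2}\Big(v_{(2)}f(v_{(2)})-\frac{v_{(2)}^{-\frac N{N-1}}}{N-1}\int_0^{v_{(2)}}s^{\frac N{N-1}}f(s)\,ds\Big)$; for each $i$, on the profiles with $v_i=1$ and $v_j=v_{(2)}\in(0,1)$ for all $j\ne i$, it has density (w.r.t. $dv_{(2)}$) $\frac1{N-1}\Big(v_{(2)}f(v_{(2)})-\frac{v_{(2)}^{-\frac N{N-1}}}{N-1}\int_0^{v_{(2)}}s^{\frac N{N-1}}f(s)\,ds\Big)$; and it has a point mass $\Pr(1)-\frac1{N-1}\int_{(0,1)}s^{\frac N{N-1}}f(s)\,ds$ at $(1,\dots,1)$. It places no weight elsewhere. *)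

theory Defs
  imports "HOL-Probability.Probability"
begin

text \<open>Bidders are indexed by a finite type 'n, N = CARD('n); value profiles are
vectors in real^'n.\<close>

definition cube :: "(real^'n::finite) set" where
  "cube = {v. \<forall>i. v $ i \<in> {0..1}}"

definition upd :: "real^'n::finite \<Rightarrow> 'n \<Rightarrow> real \<Rightarrow> real^'n" where
  "upd v i x = (\<chi> j. if j = i then x else v $ j)"

definition vmax :: "real^'n::finite \<Rightarrow> real" where
  "vmax v = Max (range (\<lambda>j. v $ j))"

definition nmax :: "real^'n::finite \<Rightarrow> nat" where
  "nmax v = card {i. v $ i = vmax v}"

definition vsec :: "real^'n::finite \<Rightarrow> real" where
  "vsec v = (if nmax v \<ge> 2 then vmax v else Max {v $ j | j. v $ j < vmax v})"

text \<open>Mechanism properties; a mechanism is a pair of functions q t :: real^'n => real^'n,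
relevant on the cube [0,1]^N.\<close>

definition feasible :: "(real^'n::finite \<Rightarrow> real^'n) \<Rightarrow> bool" where
  "feasible q \<longleftrightarrow> (\<forall>v\<in>cube. (\<forall>i. 0 \<le> q v $ i \<and> q v $ i \<le> 1) \<and> (\<Sum>i\<in>UNIV. q v $ i) \<le> 1)"

definition DSIC :: "(real^'n::finite \<Rightarrow> real^'n) \<Rightarrow> (real^'n \<Rightarrow> real^'n) \<Rightarrow> bool" where
  "DSIC q t \<longleftrightarrow> (\<forall>v\<in>cube. \<forall>i. \<forall>x\<in>{0..1}.
      v $ i * q v $ i - t v $ i \<ge> v $ i * q (upd v i x) $ i - t (upd v i x) $ i)"

definition EPIR :: "(real^'n::finite \<Rightarrow> real^'n) \<Rightarrow> (real^'n \<Rightarrow> real^'n) \<Rightarrow> bool" where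
  "EPIR q t \<longleftrightarrow> (\<forall>v\<in>cube. \<forall>i. v $ i * q v $ i - t v $ i \<ge> 0)"

definition exclusive :: "(real^'n::finite \<Rightarrow> real^'n) \<Rightarrow> bool" where
  "exclusive q \<longleftrightarrow> (\<forall>v\<in>cube. \<forall>i. v $ i < vmax v \<longrightarrow> q v $ i = 0)"

definition admissible :: "(real^'n::finite \<Rightarrow> real^'n) \<Rightarrow> (real^'n \<Rightarrow> real^'n) \<Rightarrow> bool" where
  "admissible q t \<longleftrightarrow> feasible q \<and> exclusive q \<and> DSIC q t \<and> EPIR q t"

definition U :: "(real^'n::finite \<Rightarrow> real^'n) \<Rightarrow> (real^'n) measure \<Rightarrow> real" where
  "U t \<pi> = (\<integral>v. (\<Sum>i\<in>UNIV. t v $ i) \<partial>\<pi>)"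

definition marginal_ok :: "real measure \<Rightarrow> (real \<Rightarrow> real) \<Rightarrow> bool" where
  "marginal_ok F f \<longleftrightarrow>
     prob_space F \<and> sets F = sets borel \<and> emeasure F {0..1} = 1 \<and>
     (\<forall>a b. 0 \<le> a \<and> a < b \<and> b \<le> 1 \<longrightarrow> measure F {a<..<b} > 0) \<and>
     f \<in> borel_measurable borel \<and> (\<forall>x\<in>{0<..<1}. 0 \<le> f x) \<and>
     (\<forall>A\<in>sets borel. A \<subseteq> {0<..<1} \<longrightarrow> emeasure F A = (\<integral>\<^sup>+x\<in>A. ennreal (f x) \<partial>lborel))"

definition PiF :: "real measure \<Rightarrow> (real^'n::finite) measure set" where
  "PiF F = {\<pi>. prob_space \<pi> \<and> sets \<pi> = sets borel \<and> (\<forall>i. distr \<pi> borel (\<lambda>v. v $ i) = F)}"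

definition expo :: "'n::finite itself \<Rightarrow> real" where
  "expo _ = real CARD('n) / (real CARD('n) - 1)"

definition J :: "'n::finite itself \<Rightarrow> (real \<Rightarrow> real) \<Rightarrow> real \<Rightarrow> real" where
  "J n f x = (LINT s:{0<..<x}|lborel. s powr expo n * f s)"

definition regI :: "'n::finite itself \<Rightarrow> real measure \<Rightarrow> (real \<Rightarrow> real) \<Rightarrow> bool" where
  "regI n F f \<longleftrightarrow>
     (\<forall>x\<in>{0<..<1}. f x \<ge> x powr (-1 - expo n) / (real CARD('n) - 1) * J n f x) \<and>
     measure F {1} \<ge> 1 / (real CARD('n) - 1) * J n f 1"

definition regII :: "'n::finite itself \<Rightarrow> real measure \<Rightarrow> (real \<Rightarrow> real) \<Rightarrow> bool" where
  "regII n F f \<longleftrightarrow>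
     mono_on {0<..<1} (\<lambda>x. x\<^sup>2 * f x) \<and>
     measure F {1} \<ge> 1 / (real CARD('n) - 1) * J n f 1"

definition qstar :: "real^'n::finite \<Rightarrow> real^'n" where
  "qstar v = (\<chi> i. if v $ i = vmax v
      then vmax v powr (1 / (real CARD('n) - 1)) / real (nmax v) else 0)"

definition tstar :: "real^'n::finite \<Rightarrow> real^'n" where
  "tstar v = (\<chi> i. if v $ i = vmax v
      then (if nmax v = 1
            then 1 / real CARD('n) * vmax v powr expo TYPE('n)
                 + (real CARD('n) - 1) / real CARD('n) * vsec v powr expo TYPE('n)
            else 1 / real (nmax v) * vmax v powr expo TYPE('n))
      else 0)"

definition hdens :: "'n::finite itself \<Rightarrow> (real \<Rightarrow> real) \<Rightarrow> real \<Rightarrow> real" where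
  "hdens n f y = y * f y - y powr (- expo n) / (real CARD('n) - 1) * J n f y"

definition emb :: "'n::finite \<Rightarrow> real \<Rightarrow> real \<Rightarrow> real^'n" where
  "emb i a b = (\<chi> j. if j = i then a else b)"

definition pistar_em :: "'n::finite itself \<Rightarrow> real measure \<Rightarrow> (real \<Rightarrow> real) \<Rightarrow> (real^'n) set \<Rightarrow> ennreal" where
  "pistar_em n F f A =
     ennreal (measure F {0}) * indicator A (0::real^'n)
   + (\<Sum>i\<in>UNIV. \<integral>\<^sup>+p\<in>{(a,b). 0 < b \<and> b \<le> a \<and> a < 1}.
        ennreal (1 / ((real CARD('n) - 1) * (fst p)\<^sup>2) * hdens n f (snd p))
        * indicator A (emb i (fst p) (snd p)) \<partial>(lborel :: (real \<times> real) measure))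
   + (\<Sum>i\<in>UNIV. \<integral>\<^sup>+b\<in>{0<..<1}.
        ennreal (1 / (real CARD('n) - 1) * hdens n f b) * indicator A (emb i 1 b) \<partial>lborel)
   + ennreal (measure F {1} - 1 / (real CARD('n) - 1) * J n f 1) * indicator A (1::real^'n)"

definition pistar :: "'n::finite itself \<Rightarrow> real measure \<Rightarrow> (real \<Rightarrow> real) \<Rightarrow> (real^'n) measure" where
  "pistar n F f = measure_of UNIV (sets borel) (pistar_em n F f)"

end

(*
  Write e = N / (N - 1). A bidder with value y, facing the highest competing value m, obtains from
  the auction (qstar, tstar) the utility (N - 1) / N * max 0 (y^e - m^e), which by Young's
  inequality no misreport improves; so the auction is DSIC and EPIR. Its revenue dominates
  (1/N) * sum_j v_j^e pointwise, with equality on the profiles where all losers have a common value.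
  Hence every pi with marginals F yields at least E[X^e], and pistar, which charges only such
  profiles, yields exactly E[X^e]. That pistar has marginals F is a layer-cake computation with the
  weight b^(-e); regularity (I) makes its densities nonnegative, and (II) implies (I) by bounding
  J(x) through the monotonicity of s^2 f(s).

  Conversely, fix the losers' common value b under pistar: the winner's value a then has density
  proportional to a^(-2) on (b, 1) plus an atom at 1. For any exclusive DSIC and EPIR mechanism the
  winner's payment T(a) satisfies the envelope bound int_b^1 T(a) a^(-2) da + T(1) <= 1, so the
  expected revenue shortfall 1 - sum_j t_j is at least the pistar-mass of the profiles with highest
  value below 1, which equals 1 - E[X^e].
*)
theory Submission
  imports Defs
begin

section \<open>Value profiles\<close>

lemma exists_other_bidder:
  assumes "CARD('n::finite) \<ge> 2"
  shows "\<exists>j::'n. j \<noteq> i"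
proof (rule ccontr)
  assume "\<not> (\<exists>j::'n. j \<noteq> i)"
  then have "(UNIV :: 'n set) = {i}" by auto
  then have "CARD('n) = card {i}" by simp
  then show False using assms by simp
qed

definition max_others :: "real^'n::finite \<Rightarrow> 'n \<Rightarrow> real" where
  "max_others v i = Max ((\<lambda>j. v $ j) ` (UNIV - {i}))"

lemma max_others_ge: "j \<noteq> i \<Longrightarrow> (v::real^'n::finite) $ j \<le> max_others v i"
  unfolding max_others_def by (rule Max_ge) auto

lemma max_others_attained:
  assumes "CARD('n::finite) \<ge> 2"
  obtains j where "j \<noteq> i" "v $ j = max_others v (i::'n)"
proof -
  have "UNIV - {i} \<noteq> {}" using exists_other_bidder[OF assms] by auto
  then have "max_others v i \<in> (\<lambda>j. v $ j) ` (UNIV - {i})"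
    unfolding max_others_def by (intro Max_in) auto
  then obtain j where "j \<in> UNIV - {i}" "max_others v i = v $ j" by blast
  then show ?thesis using that by simp
qed

lemma max_others_upd: "max_others (upd v i x) i = max_others v i"
  unfolding max_others_def upd_def by (intro arg_cong[where f = Max] image_cong) auto

lemma emb_nth: "emb i a b $ k = (if k = i then a else b)"
  unfolding emb_def by simp

lemma max_others_emb:
  assumes "CARD('n::finite) \<ge> 2"
  shows "max_others (emb i a b :: real^'n) i = b"
proof -
  have "(\<lambda>j. emb i a b $ j) ` (UNIV - {i}) = {b}"
    using exists_other_bidder[OF assms, of i] by (auto simp: emb_nth)
  then show ?thesis unfolding max_others_def by simp
qed

lemma max_others_cube:
  assumes "CARD('n::finite) \<ge> 2" and "v \<in> cube"
  shows "max_others v (i::'n) \<in> {0..1}"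
proof -
  obtain j where j: "j \<noteq> i" "v $ j = max_others v i" using max_others_attained[OF assms(1)] .
  have "v $ j \<in> {0..1}" using assms(2) unfolding cube_def by blast
  then show ?thesis using j by simp
qed

lemma vmax_ge: "v $ j \<le> vmax v"
  unfolding vmax_def by (rule Max_ge) auto

lemma vmax_attained:
  obtains j where "v $ j = vmax (v::real^'n::finite)"
proof -
  have "vmax v \<in> range (\<lambda>j. v $ j)" unfolding vmax_def by (rule Max_in) auto
  then show ?thesis using that by auto
qed

lemma vmax_cube: "v \<in> cube \<Longrightarrow> vmax v \<in> {0..1}"
proof -
  assume "v \<in> cube"
  then have "v $ j \<in> {0..1}" for j unfolding cube_def by blast
  moreover obtain j where "v $ j = vmax v" by (rule vmax_attained)
  ultimately show ?thesis by metis
qed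

lemma vmax_emb: "b \<le> a \<Longrightarrow> vmax (emb i a b :: real^'n::finite) = a"
  unfolding vmax_def by (rule Max_eqI) (auto simp: emb_nth intro!: image_eqI[of _ _ i])

lemma nmax_ge_1: "1 \<le> nmax (v::real^'n::finite)"
proof -
  obtain j where "v $ j = vmax v" using vmax_attained .
  then have "{i. v $ i = vmax v} \<noteq> {}" by auto
  then show ?thesis unfolding nmax_def by (simp add: Suc_leI card_gt_0_iff)
qed

lemma upd_nth_same: "upd v i x $ i = x"
  unfolding upd_def by simp

lemma upd_emb: "upd (emb i a b) i x = emb i x b"
  unfolding upd_def emb_def by (simp add: vec_eq_iff)

lemma emb_cube: "a \<in> {0..1} \<Longrightarrow> b \<in> {0..1} \<Longrightarrow> emb i a b \<in> cube"
  unfolding cube_def by (auto simp: emb_nth)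

lemma unique_top_bidder:
  assumes N: "CARD('n::finite) \<ge> 2" and top: "max_others v i < v $ (i::'n)"
  shows "vmax v = v $ i" "nmax v = 1" "vsec v = max_others v i"
proof -
  have lt: "v $ j < v $ i" if "j \<noteq> i" for j
    using max_others_ge[OF that, of v] top by linarith
  show vm: "vmax v = v $ i"
    unfolding vmax_def by (rule Max_eqI) (auto intro: less_imp_le lt)
  have "{j. v $ j = vmax v} = {i}" using vm lt by fastforce
  then show nm: "nmax v = 1" unfolding nmax_def by simp
  have "{v $ j | j. v $ j < vmax v} = (\<lambda>j. v $ j) ` (UNIV - {i})"
    using lt vm by auto
  then show "vsec v = max_others v i" unfolding vsec_def max_others_def using nm by simp
qed

lemma tied_top_bidder:
  assumes N: "CARD('n::finite) \<ge> 2" and tie: "v $ i = max_others v (i::'n)"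
  shows "vmax v = v $ i" "2 \<le> nmax v"
proof -
  have le: "v $ j \<le> v $ i" for j
    using max_others_ge[of j i v] tie by (cases "j = i") auto
  show vm: "vmax v = v $ i"
    unfolding vmax_def by (rule Max_eqI) (auto simp: le)
  obtain j where j: "j \<noteq> i" "v $ j = max_others v i" using max_others_attained[OF N] .
  have "{i, j} \<subseteq> {k. v $ k = vmax v}" using j vm tie by auto
  then have "card {i, j} \<le> nmax v" unfolding nmax_def by (intro card_mono) auto
  then show "2 \<le> nmax v" using j by simp
qed

lemma losing_bidder:
  assumes "CARD('n::finite) \<ge> 2" and "v $ i < max_others v (i::'n)"
  shows "v $ i < vmax v"
proof -
  obtain j where "j \<noteq> i" "v $ j = max_others v i" using max_others_attained[OF assms(1)] .
  then show ?thesis using assms(2) vmax_ge[of v j] by linarith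
qed

lemma vsec_eq_max_others:
  assumes N: "CARD('n::finite) \<ge> 2" and top: "v $ i = vmax v"
  shows "vsec v = max_others v (i::'n)"
proof (cases "max_others v i < v $ i")
  case True
  then show ?thesis by (rule unique_top_bidder(3)[OF N])
next
  case False
  obtain j where "j \<noteq> i" "v $ j = max_others v i" using max_others_attained[OF N] .
  then have tie: "v $ i = max_others v i" using False top vmax_ge[of v j] by linarith
  have "2 \<le> nmax v" using tied_top_bidder(2)[OF N tie] .
  then have "vsec v = vmax v" unfolding vsec_def by simp
  then show ?thesis using top tie by linarith
qed

lemma vsec_eq_Max_min:
  assumes N: "CARD('n::finite) \<ge> 2"
  shows "vsec (v::real^'n) = Max ((\<lambda>(a, b). min (v $ a) (v $ b)) ` {(a, b). a \<noteq> b})"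
proof -
  obtain i where top: "v $ i = vmax v" by (rule vmax_attained)
  obtain j where j: "j \<noteq> i" "v $ j = max_others v i" using max_others_attained[OF N] .
  have "Max ((\<lambda>(a, b). min (v $ a) (v $ b)) ` {(a, b). a \<noteq> b}) = max_others v i"
  proof (rule Max_eqI)
    show "max_others v i \<in> (\<lambda>(a, b). min (v $ a) (v $ b)) ` {(a, b). a \<noteq> b}"
      using j top vmax_ge[of v j] by (intro image_eqI[of _ _ "(i, j)"]) auto
    fix y assume "y \<in> (\<lambda>(a, b). min (v $ a) (v $ b)) ` {(a, b). a \<noteq> b}"
    then obtain a b where "a \<noteq> b" "y = min (v $ a) (v $ b)" by auto
    then show "y \<le> max_others v i"
      using max_others_ge[of a i v] max_others_ge[of b i v] by (cases "a = i") auto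
  qed simp
  then show ?thesis using vsec_eq_max_others[OF N top] by simp
qed

lemma nmax_eq_sum: "real (nmax v) = (\<Sum>i\<in>UNIV. if v $ i = vmax v then 1 else 0)"
  unfolding nmax_def by (simp add: sum.If_cases)

lemma sum_UNIV_if_eq:
  "(\<Sum>j\<in>(UNIV::'n::finite set). if j = k then x else y)
     = x + of_nat (CARD('n) - 1) * (y::'a::comm_semiring_1)"
proof -
  have "(\<Sum>j\<in>(UNIV::'n set). if j = k then x else y) = x + (\<Sum>j\<in>UNIV - {k}. y)"
    by (subst sum.remove[of _ k]) (auto intro!: sum.cong)
  also have "\<dots> = x + of_nat (CARD('n) - 1) * y" by (simp add: card_Diff_singleton)
  finally show ?thesis .
qed

lemma of_nat_card_minus_1: "of_nat (CARD('n::finite) - 1) = ennreal (real CARD('n) - 1)"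
proof -
  have "1 \<le> CARD('n)" using card_ge_0_finite[of "UNIV :: 'n set"] by (simp add: Suc_le_eq)
  then show ?thesis by (simp add: ennreal_of_nat_eq_real_of_nat of_nat_diff)
qed

lemma card_minus_1_pos: "CARD('n::finite) \<ge> 2 \<Longrightarrow> 0 < real CARD('n) - 1"
  by simp

section \<open>The second price auction with random reserves\<close>

lemma expo_eq: "CARD('n::finite) \<ge> 2 \<Longrightarrow> expo TYPE('n) = 1 + 1 / (real CARD('n) - 1)"
  unfolding expo_def by (simp add: field_simps)

lemma expo_gt_1: "CARD('n::finite) \<ge> 2 \<Longrightarrow> 1 < expo TYPE('n)"
  unfolding expo_def by (simp add: field_simps)

lemma expo_nonneg: "0 \<le> expo (n::'n::finite itself)"
proof -
  have "1 \<le> real CARD('n)" using card_ge_0_finite[of "UNIV :: 'n set"] by (simp add: Suc_le_eq)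
  then show ?thesis unfolding expo_def by simp
qed

lemma young_powr:
  fixes n x y :: real
  assumes "1 < n" "0 \<le> x" "0 \<le> y"
  shows "y * x powr (1 / (n - 1)) \<le> (n - 1) / n * y powr (n / (n - 1)) + x powr (n / (n - 1)) / n"
proof -
  have "y * x powr (1 / (n - 1)) \<le> y powr (n / (n - 1)) / (n / (n - 1)) + (x powr (1 / (n - 1))) powr n / n"
    by (rule Youngs_inequality) (use assms in \<open>auto simp: field_simps\<close>)
  also have "(x powr (1 / (n - 1))) powr n = x powr (n / (n - 1))"
    using assms by (simp add: powr_powr)
  finally show ?thesis using assms by (simp add: mult.commute)
qed

lemma young_payoff_bound:
  fixes n m x y :: real
  assumes n: "1 < n" and x: "0 \<le> x" and y: "0 \<le> y"
  shows "max 0 (y * x powr (1 / (n - 1)) - x powr (n / (n - 1)) / n - (n - 1) / n * m powr (n / (n - 1)))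
    \<le> (n - 1) / n * max 0 (y powr (n / (n - 1)) - m powr (n / (n - 1)))"
proof -
  define c where "c = (n - 1) / n"
  define d where "d = y powr (n / (n - 1)) - m powr (n / (n - 1))"
  have c: "0 \<le> c" using n unfolding c_def by simp
  have "y * x powr (1 / (n - 1)) - x powr (n / (n - 1)) / n - (n - 1) / n * m powr (n / (n - 1)) \<le> c * d"
    using young_powr[OF n x y] unfolding c_def d_def by (simp add: algebra_simps)
  then show ?thesis
    using mult_nonneg_nonneg[OF c, of d] mult_nonneg_nonpos[OF c, of d]
    unfolding c_def[symmetric] d_def[symmetric] by (auto simp: max_def)
qed

lemma qstar_tstar_unique_top:
  assumes N: "CARD('n::finite) \<ge> 2" and top: "max_others v i < v $ (i::'n)"
  shows "qstar v $ i = v $ i powr (1 / (real CARD('n) - 1))"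
    "tstar v $ i = v $ i powr expo TYPE('n) / real CARD('n)
       + (real CARD('n) - 1) / real CARD('n) * max_others v i powr expo TYPE('n)"
  unfolding qstar_def tstar_def using unique_top_bidder[OF N top] by simp_all

lemma qstar_tstar_tied:
  assumes N: "CARD('n::finite) \<ge> 2" and tie: "v $ i = max_others v (i::'n)"
  shows "qstar v $ i = max_others v i powr (1 / (real CARD('n) - 1)) / real (nmax v)"
    "tstar v $ i = max_others v i powr expo TYPE('n) / real (nmax v)"
  unfolding qstar_def tstar_def using tied_top_bidder[OF N tie] tie by auto

lemma qstar_tstar_losing: "v $ i < vmax v \<Longrightarrow> qstar v $ i = 0 \<and> tstar v $ i = 0"
  unfolding qstar_def tstar_def by simp

lemma divide_le_max_0:
  fixes x k :: real
  assumes "1 \<le> k"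
  shows "x / k \<le> max 0 x"
proof (cases "0 \<le> x")
  case True
  then have "x / k \<le> x / 1" using assms by (intro divide_left_mono) auto
  then show ?thesis by simp
next
  case False
  then show ?thesis using assms by (simp add: divide_nonpos_pos)
qed

text \<open>Here y is bidder i's true value and w the reported profile; the bound is the truthful
  payoff of payoff_star, so this is the DSIC inequality.\<close>
lemma payoff_star_le:
  assumes N: "CARD('n::finite) \<ge> 2" and y: "0 \<le> y"
    and w: "0 \<le> w $ i" and others: "0 \<le> max_others w (i::'n)"
  shows "y * qstar w $ i - tstar w $ i
    \<le> (real CARD('n) - 1) / real CARD('n)
       * max 0 (y powr expo TYPE('n) - max_others w i powr expo TYPE('n))"
proof -
  define n where "n = real CARD('n)"
  define m where "m = max_others w i"
  define e where "e = expo TYPE('n)"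
  define P where "P x = y * x powr (1 / (n - 1)) - x powr e / n - (n - 1) / n * m powr e" for x
  have n: "2 \<le> n" using N unfolding n_def by simp
  have e: "e = n / (n - 1)" unfolding e_def expo_def n_def ..
  have bound: "max 0 (P x) \<le> (n - 1) / n * max 0 (y powr e - m powr e)" if "0 \<le> x" for x
    unfolding P_def e using young_payoff_bound[of n x y m] n that y by simp
  consider (top) "m < w $ i" | (tie) "w $ i = m" | (lose) "w $ i < m" by linarith
  then show ?thesis
  proof cases
    case top
    have "y * qstar w $ i - tstar w $ i = P (w $ i)"
      using qstar_tstar_unique_top[OF N top[unfolded m_def]] unfolding P_def m_def n_def e_def by simp
    then show ?thesis using bound[OF w] unfolding n_def m_def e_def by linarith
  next
    case tie
    have K: "1 \<le> real (nmax w)" using nmax_ge_1[of w] by simp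
    have Pm: "P m = y * m powr (1 / (n - 1)) - m powr e"
      unfolding P_def using n by (simp add: field_simps)
    have q: "qstar w $ i = m powr (1 / (n - 1)) / real (nmax w)"
        "tstar w $ i = m powr e / real (nmax w)"
      using qstar_tstar_tied[OF N tie[unfolded m_def]] unfolding m_def n_def e_def by simp_all
    have "y * qstar w $ i - tstar w $ i = P m / real (nmax w)"
      unfolding q Pm by (simp add: diff_divide_distrib)
    also have "\<dots> \<le> max 0 (P m)" using K by (rule divide_le_max_0)
    also have "\<dots> \<le> (n - 1) / n * max 0 (y powr e - m powr e)"
      using others[folded m_def] by (rule bound)
    finally show ?thesis unfolding n_def m_def e_def .
  next
    case lose
    then have "qstar w $ i = 0" "tstar w $ i = 0"
      using qstar_tstar_losing losing_bidder[OF N] unfolding m_def by blast+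
    then show ?thesis using n unfolding n_def by simp
  qed
qed

lemma payoff_star:
  assumes N: "CARD('n::finite) \<ge> 2" and v: "0 \<le> v $ i" and others: "0 \<le> max_others v (i::'n)"
  shows "v $ i * qstar v $ i - tstar v $ i
    = (real CARD('n) - 1) / real CARD('n)
       * max 0 (v $ i powr expo TYPE('n) - max_others v i powr expo TYPE('n))"
proof -
  define n where "n = real CARD('n)"
  define m where "m = max_others v i"
  define e where "e = expo TYPE('n)"
  define y where "y = v $ i"
  have n: "2 \<le> n" using N unfolding n_def by simp
  have e: "0 < e" using expo_gt_1[OF N] unfolding e_def by simp
  have yy: "y * y powr (1 / (n - 1)) = y powr e"
    using powr_mult_base[OF v] expo_eq[OF N] unfolding y_def e_def n_def by simp
  consider (top) "m < y" | (tie) "y = m" | (lose) "y < m" by linarith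
  then show ?thesis
  proof cases
    case top
    have "y * qstar v $ i - tstar v $ i = y powr e - (y powr e / n + (n - 1) / n * m powr e)"
      using qstar_tstar_unique_top[OF N top[unfolded m_def y_def]] yy
      unfolding n_def e_def m_def y_def by simp
    also have "\<dots> = (n - 1) / n * (y powr e - m powr e)"
      using n by (simp add: field_simps)
    finally have "y * qstar v $ i - tstar v $ i = (n - 1) / n * (y powr e - m powr e)" .
    moreover have "m powr e < y powr e" using top others e unfolding m_def by (intro powr_less_mono2) auto
    ultimately show ?thesis unfolding n_def m_def e_def y_def by simp
  next
    case tie
    have "y * qstar v $ i - tstar v $ i = (y * y powr (1 / (n - 1)) - y powr e) / real (nmax v)"
      using qstar_tstar_tied[OF N tie[unfolded m_def y_def]] tie
      unfolding n_def e_def m_def y_def by (simp add: diff_divide_distrib)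
    then show ?thesis using tie yy unfolding n_def m_def e_def y_def by simp
  next
    case lose
    then have "qstar v $ i = 0" "tstar v $ i = 0"
      using qstar_tstar_losing losing_bidder[OF N] unfolding m_def y_def by blast+
    moreover have "y powr e \<le> m powr e" using lose v e unfolding y_def by (intro powr_mono2) auto
    ultimately show ?thesis unfolding n_def m_def e_def y_def by simp
  qed
qed

lemma payoff_star_nonneg:
  assumes N: "CARD('n::finite) \<ge> 2" and v: "v \<in> cube"
  shows "0 \<le> v $ (i::'n) * qstar v $ i - tstar v $ i"
proof -
  have "0 \<le> v $ i" using v unfolding cube_def by auto
  moreover have "0 \<le> max_others v i" using max_others_cube[OF N v] by simp
  ultimately show ?thesis using N by (simp add: payoff_star[OF N])
qed

lemma qstar_bounds:
  assumes "(v::real^'n::finite) \<in> cube"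
  shows "0 \<le> qstar v $ i" "qstar v $ i \<le> 1" "(\<Sum>i\<in>UNIV. qstar v $ i) \<le> 1"
proof -
  define p where "p = vmax v powr (1 / (real CARD('n) - 1))"
  have p: "0 \<le> p" "p \<le> 1"
    using vmax_cube[OF assms] unfolding p_def by (auto intro: powr_le1)
  have K: "1 \<le> real (nmax v)" using nmax_ge_1[of v] by simp
  have q: "qstar v $ j = (if v $ j = vmax v then p / real (nmax v) else 0)" for j
    unfolding qstar_def p_def by simp
  show "0 \<le> qstar v $ i" "qstar v $ i \<le> 1"
    unfolding q using p K by (auto simp: divide_le_eq)
  have "(\<Sum>i\<in>UNIV. qstar v $ i) = (\<Sum>i\<in>{j \<in> UNIV. v $ j = vmax v}. p / real (nmax v))"
    unfolding q by (rule sum.inter_filter[symmetric]) simp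
  also have "\<dots> = real (nmax v) * (p / real (nmax v))" unfolding nmax_def by simp
  also have "\<dots> = p" using K by simp
  finally show "(\<Sum>i\<in>UNIV. qstar v $ i) \<le> 1" using p by simp
qed

lemma admissible_star:
  assumes N: "CARD('n::finite) \<ge> 2"
  shows "admissible (qstar :: real^'n \<Rightarrow> real^'n) tstar"
  unfolding admissible_def
proof (intro conjI)
  show "feasible (qstar :: real^'n \<Rightarrow> real^'n)"
    unfolding feasible_def using qstar_bounds by blast
  show "exclusive (qstar :: real^'n \<Rightarrow> real^'n)"
    unfolding exclusive_def using qstar_tstar_losing by blast
  show "EPIR (qstar :: real^'n \<Rightarrow> real^'n) tstar"
    unfolding EPIR_def using payoff_star_nonneg[OF N] by blast
  show "DSIC (qstar :: real^'n \<Rightarrow> real^'n) tstar"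
    unfolding DSIC_def
  proof (intro ballI allI)
    fix v :: "real^'n" and i and x :: real
    assume v: "v \<in> cube" and x: "x \<in> {0..1}"
    have vi: "0 \<le> v $ i" using v unfolding cube_def by auto
    have others: "0 \<le> max_others v i" using max_others_cube[OF N v] by simp
    show "v $ i * qstar (upd v i x) $ i - tstar (upd v i x) $ i \<le> v $ i * qstar v $ i - tstar v $ i"
      using payoff_star_le[OF N vi, of "upd v i x" i] x others
      unfolding payoff_star[OF N vi others] by (simp add: max_others_upd upd_nth_same)
  qed
qed

lemma sum_tstar:
  "(\<Sum>j\<in>UNIV. tstar (v::real^'n::finite) $ j)
     = (if nmax v = 1
        then vmax v powr expo TYPE('n) / real CARD('n)
             + (real CARD('n) - 1) / real CARD('n) * vsec v powr expo TYPE('n)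
        else vmax v powr expo TYPE('n))"
proof -
  define c where "c = (if nmax v = 1
        then 1 / real CARD('n) * vmax v powr expo TYPE('n)
             + (real CARD('n) - 1) / real CARD('n) * vsec v powr expo TYPE('n)
        else 1 / real (nmax v) * vmax v powr expo TYPE('n))"
  have K: "1 \<le> real (nmax v)" using nmax_ge_1[of v] by simp
  have "(\<Sum>j\<in>UNIV. tstar v $ j) = (\<Sum>j\<in>UNIV. if v $ j = vmax v then c else 0)"
    unfolding tstar_def c_def by simp
  also have "\<dots> = (\<Sum>j\<in>{j \<in> UNIV. v $ j = vmax v}. c)"
    by (rule sum.inter_filter[symmetric]) simp
  also have "\<dots> = real (nmax v) * c" unfolding nmax_def by simp
  finally show ?thesis using K unfolding c_def by (cases "nmax v = 1") simp_all
qed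

lemma sum_tstar_ge:
  assumes N: "CARD('n::finite) \<ge> 2" and v: "(v::real^'n) \<in> cube"
  shows "(\<Sum>j\<in>UNIV. v $ j powr expo TYPE('n)) / real CARD('n) \<le> (\<Sum>j\<in>UNIV. tstar v $ j)"
proof -
  obtain i where top: "v $ i = vmax v" by (rule vmax_attained)
  define n where "n = real CARD('n)"
  define e where "e = expo TYPE('n)"
  define m where "m = max_others v i"
  have n: "2 \<le> n" using N unfolding n_def by simp
  have e: "0 \<le> e" unfolding e_def by (rule expo_nonneg)
  have vnn: "0 \<le> v $ j" for j using v unfolding cube_def by auto
  have mv: "m \<le> vmax v"
  proof -
    obtain j where "j \<noteq> i" "v $ j = m" using max_others_attained[OF N] unfolding m_def .
    then show ?thesis using vmax_ge[of v j] by simp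
  qed
  have "(\<Sum>j\<in>UNIV. v $ j powr e) = v $ i powr e + (\<Sum>j\<in>UNIV - {i}. v $ j powr e)"
    by (subst sum.remove[of _ i]) auto
  also have "(\<Sum>j\<in>UNIV - {i}. v $ j powr e) \<le> (\<Sum>j\<in>UNIV - {i}. m powr e)"
    using max_others_ge[of _ i v] vnn e unfolding m_def by (intro sum_mono powr_mono2) auto
  also have "(\<Sum>j\<in>UNIV - {i}. m powr e) = (n - 1) * m powr e"
    unfolding n_def by (simp add: card_Diff_singleton of_nat_diff)
  finally have S: "(\<Sum>j\<in>UNIV. v $ j powr e) \<le> vmax v powr e + (n - 1) * m powr e"
    using top by simp
  show ?thesis
  proof (cases "nmax v = 1")
    case True
    then show ?thesis
      using S n unfolding sum_tstar vsec_eq_max_others[OF N top] n_def e_def m_def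
      by (simp add: field_simps)
  next
    case False
    have "m powr e \<le> vmax v powr e"
      using mv e max_others_cube[OF N v, of i] unfolding m_def by (intro powr_mono2) auto
    then have "vmax v powr e + (n - 1) * m powr e \<le> vmax v powr e + (n - 1) * vmax v powr e"
      using n by (intro add_left_mono mult_left_mono) auto
    then have "(\<Sum>j\<in>UNIV. v $ j powr e) \<le> n * vmax v powr e"
      using S by (simp add: algebra_simps)
    then show ?thesis using False n unfolding sum_tstar n_def e_def by (simp add: field_simps)
  qed
qed

lemma sum_tstar_emb:
  assumes N: "CARD('n::finite) \<ge> 2" and ab: "0 \<le> b" "b \<le> a"
  shows "(\<Sum>j\<in>UNIV. tstar (emb i a b :: real^'n) $ j)
    = (\<Sum>j\<in>UNIV. emb i a b $ j powr expo TYPE('n)) / real CARD('n)"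
proof -
  define n where "n = real CARD('n)"
  define e where "e = expo TYPE('n)"
  let ?v = "emb i a b :: real^'n"
  have n: "2 \<le> n" using N unfolding n_def by simp
  have "(\<Sum>j\<in>UNIV. ?v $ j powr e) = (\<Sum>j\<in>UNIV. if j = i then a powr e else b powr e)"
    by (intro sum.cong) (auto simp: emb_nth)
  also have "\<dots> = a powr e + (n - 1) * b powr e"
    unfolding sum_UNIV_if_eq n_def using N by (simp add: of_nat_diff)
  finally have S: "(\<Sum>j\<in>UNIV. ?v $ j powr e) = a powr e + (n - 1) * b powr e" .
  show ?thesis
  proof (cases "b < a")
    case True
    have top: "max_others ?v i < ?v $ i" using True by (simp add: max_others_emb[OF N] emb_nth)
    show ?thesis
      using unique_top_bidder[OF N top] S n
      unfolding sum_tstar max_others_emb[OF N] n_def e_def by (simp add: emb_nth field_simps)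
  next
    case False
    then have "?v $ j = a" for j using ab by (simp add: emb_nth)
    then have "vmax ?v = a" "nmax ?v = CARD('n)" unfolding vmax_def nmax_def by simp_all
    then show ?thesis
      using S N False ab unfolding sum_tstar n_def e_def by (simp add: field_simps)
  qed
qed

lemma sum_tstar_le_1:
  assumes N: "CARD('n::finite) \<ge> 2" and v: "(v::real^'n) \<in> cube"
  shows "(\<Sum>j\<in>UNIV. tstar v $ j) \<le> 1"
proof -
  have "(\<Sum>j\<in>UNIV. tstar v $ j) \<le> (\<Sum>j\<in>UNIV. v $ j * qstar v $ j)"
    using payoff_star_nonneg[OF N v] by (intro sum_mono) (simp add: algebra_simps)
  also have "\<dots> \<le> (\<Sum>j\<in>UNIV. qstar v $ j)"
    using qstar_bounds(1)[OF v] v unfolding cube_def by (intro sum_mono mult_left_le_one_le) auto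
  also have "\<dots> \<le> 1" using qstar_bounds(3)[OF v] .
  finally show ?thesis .
qed

lemma borel_measurable_sum_tstar:
  assumes N: "CARD('n::finite) \<ge> 2"
  shows "(\<lambda>v::real^'n. \<Sum>j\<in>UNIV. tstar v $ j) \<in> borel_measurable borel"
proof -
  have "(\<lambda>v::real^'n. \<Sum>j\<in>UNIV. tstar v $ j)
    = (\<lambda>v. if (\<Sum>i\<in>UNIV. if v $ i = vmax v then 1 else 0) = (1::real)
        then vmax v powr expo TYPE('n) / real CARD('n)
          + (real CARD('n) - 1) / real CARD('n)
            * Max ((\<lambda>(a, b). min (v $ a) (v $ b)) ` {(a, b). a \<noteq> b}) powr expo TYPE('n)
        else vmax v powr expo TYPE('n))"
    unfolding sum_tstar vsec_eq_Max_min[OF N] nmax_eq_sum[symmetric] by simp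
  also have "\<dots> \<in> borel_measurable borel" unfolding vmax_def by measurable
  finally show ?thesis .
qed

section \<open>Integrals of powers\<close>

lemma has_integral_powr_interval:
  fixes s x p :: real
  assumes s: "0 < s" "s \<le> x" and p: "p \<noteq> -1"
  shows "((\<lambda>b. b powr p) has_integral ((x powr (p + 1) - s powr (p + 1)) / (p + 1))) {s..x}"
proof -
  have "((\<lambda>b. b powr p) has_integral
      ((\<lambda>b. b powr (p + 1) / (p + 1)) x - (\<lambda>b. b powr (p + 1) / (p + 1)) s)) {s..x}"
  proof (rule fundamental_theorem_of_calculus)
    fix b assume "b \<in> {s..x}"
    then have "0 < b" using s by auto
    then have "((\<lambda>b. b powr (p + 1) / (p + 1)) has_real_derivative
        ((p + 1) * b powr (p + 1 - 1) / (p + 1))) (at b)"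
      by (intro DERIV_cdivide has_real_derivative_powr)
    also have "(p + 1) * b powr (p + 1 - 1) / (p + 1) = b powr p" using p by simp
    finally show "((\<lambda>b. b powr (p + 1) / (p + 1)) has_vector_derivative b powr p) (at b within {s..x})"
      by (simp add: has_real_derivative_iff_has_vector_derivative has_vector_derivative_at_within)
  qed (use s in simp)
  then show ?thesis by (simp add: diff_divide_distrib)
qed

lemma nn_integral_powr_interval:
  fixes s x p :: real
  assumes s: "0 < s" "s \<le> x" and p: "p \<noteq> -1"
  shows "(\<integral>\<^sup>+b. ennreal (b powr p) * indicator {s<..<x} b \<partial>lborel)
      = ennreal ((x powr (p + 1) - s powr (p + 1)) / (p + 1))"
    and "(\<integral>\<^sup>+b. ennreal (b powr p) * indicator {s..<x} b \<partial>lborel)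
      = ennreal ((x powr (p + 1) - s powr (p + 1)) / (p + 1))"
proof -
  have int: "((\<lambda>b. b powr p) has_integral ((x powr (p + 1) - s powr (p + 1)) / (p + 1))) {s<..<x}"
    using has_integral_powr_interval[OF s p] has_integral_open_interval[of "\<lambda>b. b powr p" _ s x]
    by simp
  then show "(\<integral>\<^sup>+b. ennreal (b powr p) * indicator {s<..<x} b \<partial>lborel)
      = ennreal ((x powr (p + 1) - s powr (p + 1)) / (p + 1))"
    by (rule nn_integral_has_integral_lebesgue'[rotated]) simp
  have "AE b in lborel. ennreal (b powr p) * indicator {s..<x} b = ennreal (b powr p) * indicator {s<..<x} b"
    using AE_lborel_singleton[of s] by eventually_elim (auto split: split_indicator)
  then have "(\<integral>\<^sup>+b. ennreal (b powr p) * indicator {s..<x} b \<partial>lborel)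
      = (\<integral>\<^sup>+b. ennreal (b powr p) * indicator {s<..<x} b \<partial>lborel)"
    by (rule nn_integral_cong_AE)
  also have "\<dots> = ennreal ((x powr (p + 1) - s powr (p + 1)) / (p + 1))"
    using int by (rule nn_integral_has_integral_lebesgue'[rotated]) simp
  finally show "(\<integral>\<^sup>+b. ennreal (b powr p) * indicator {s..<x} b \<partial>lborel)
      = ennreal ((x powr (p + 1) - s powr (p + 1)) / (p + 1))" .
qed

lemma inv_sq_integral:
  fixes x y :: real
  assumes "0 < x" "x \<le> y"
  shows "set_integrable lborel {x<..y} (\<lambda>s. s powr -2)"
    and "(LINT s:{x<..y}|lborel. s powr -2) = 1 / x - 1 / y"
proof -
  have "AE s in lborel. ennreal (indicator {x<..y} s * s powr -2) = ennreal (s powr -2) * indicator {x<..<y} s"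
    using AE_lborel_singleton[of y] by eventually_elim (auto split: split_indicator)
  then have nn: "(\<integral>\<^sup>+s. ennreal (indicator {x<..y} s * s powr -2) \<partial>lborel) = ennreal (1 / x - 1 / y)"
    using assms nn_integral_powr_interval(1)[of x y "-2"]
    by (simp add: nn_integral_cong_AE powr_minus_divide)
  show si: "set_integrable lborel {x<..y} (\<lambda>s. s powr -2)"
    unfolding set_integrable_def by (rule integrableI_nonneg) (use nn in \<open>auto split: split_indicator\<close>)
  have "(LINT s:{x<..y}|lborel. s powr -2) = enn2real (\<integral>\<^sup>+s. ennreal (indicator {x<..y} s * s powr -2) \<partial>lborel)"
    unfolding set_lebesgue_integral_def by (subst integral_eq_nn_integral) (auto split: split_indicator)
  also have "\<dots> = 1 / x - 1 / y" unfolding nn using assms by (simp add: field_simps)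
  finally show "(LINT s:{x<..y}|lborel. s powr -2) = 1 / x - 1 / y" .
qed

lemma nn_integral_triangle_swap:
  fixes K B :: "real \<Rightarrow> ennreal" and x :: real
  assumes [measurable]: "K \<in> borel_measurable borel" "B \<in> borel_measurable borel"
  shows "(\<integral>\<^sup>+b. K b * (\<integral>\<^sup>+s. B s * indicator {0<..<b} s \<partial>lborel) * indicator {0<..<x} b \<partial>lborel)
    = (\<integral>\<^sup>+s. B s * (\<integral>\<^sup>+b. K b * indicator {s<..<x} b \<partial>lborel) * indicator {0<..<x} s \<partial>lborel)"
proof -
  have "(\<integral>\<^sup>+b. K b * (\<integral>\<^sup>+s. B s * indicator {0<..<b} s \<partial>lborel) * indicator {0<..<x} b \<partial>lborel)
      = (\<integral>\<^sup>+b. \<integral>\<^sup>+s. K b * indicator {0<..<x} b * (B s * indicator {0<..<b} s) \<partial>lborel \<partial>lborel)"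
  proof (intro nn_integral_cong)
    fix b :: real
    have "(\<integral>\<^sup>+s. K b * indicator {0<..<x} b * (B s * indicator {0<..<b} s) \<partial>lborel)
      = K b * indicator {0<..<x} b * (\<integral>\<^sup>+s. B s * indicator {0<..<b} s \<partial>lborel)"
      by (rule nn_integral_cmult) measurable
    then show "K b * (\<integral>\<^sup>+s. B s * indicator {0<..<b} s \<partial>lborel) * indicator {0<..<x} b
      = (\<integral>\<^sup>+s. K b * indicator {0<..<x} b * (B s * indicator {0<..<b} s) \<partial>lborel)"
      by (simp add: mult_ac)
  qed
  also have "\<dots> = (\<integral>\<^sup>+s. \<integral>\<^sup>+b. K b * indicator {0<..<x} b * (B s * indicator {0<..<b} s) \<partial>lborel \<partial>lborel)"
  proof (rule lborel_pair.Fubini'[symmetric])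
    have "(\<lambda>(b, s). K b * indicator {0<..<x} b * (B s * indicator {0<..<b} s))
      = (\<lambda>q. K (fst q) * indicator {0<..<x} (fst q) * (B (snd q) * (if 0 < snd q \<and> snd q < fst q then 1 else 0)))"
      by (auto simp: fun_eq_iff split: split_indicator)
    also have "\<dots> \<in> borel_measurable (lborel \<Otimes>\<^sub>M lborel)" by measurable
    finally show "(\<lambda>(b, s). K b * indicator {0<..<x} b * (B s * indicator {0<..<b} s))
      \<in> borel_measurable (lborel \<Otimes>\<^sub>M lborel)" .
  qed
  also have "\<dots> = (\<integral>\<^sup>+s. B s * (\<integral>\<^sup>+b. K b * indicator {s<..<x} b \<partial>lborel) * indicator {0<..<x} s \<partial>lborel)"
  proof (intro nn_integral_cong)
    fix s :: real
    have "(\<integral>\<^sup>+b. K b * indicator {0<..<x} b * (B s * indicator {0<..<b} s) \<partial>lborel)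
      = (\<integral>\<^sup>+b. B s * indicator {0<..<x} s * (K b * indicator {s<..<x} b) \<partial>lborel)"
      by (intro nn_integral_cong) (auto simp: mult.commute split: split_indicator)
    also have "\<dots> = B s * indicator {0<..<x} s * (\<integral>\<^sup>+b. K b * indicator {s<..<x} b \<partial>lborel)"
      by (rule nn_integral_cmult) measurable
    finally show "(\<integral>\<^sup>+b. K b * indicator {0<..<x} b * (B s * indicator {0<..<b} s) \<partial>lborel)
      = B s * (\<integral>\<^sup>+b. K b * indicator {s<..<x} b \<partial>lborel) * indicator {0<..<x} s"
      by (simp add: mult_ac)
  qed
  finally show ?thesis .
qed

lemma nn_integral_powr_tail:
  fixes p s x :: real
  assumes p: "1 < p" and s: "0 < s" "s < x"
  shows "(\<integral>\<^sup>+b. ennreal ((p - 1) * b powr - p) * indicator {s<..<x} b \<partial>lborel)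
    = ennreal (s powr (1 - p) - x powr (1 - p))"
proof -
  have "(\<integral>\<^sup>+b. ennreal ((p - 1) * b powr - p) * indicator {s<..<x} b \<partial>lborel)
      = ennreal (p - 1) * (\<integral>\<^sup>+b. ennreal (b powr - p) * indicator {s<..<x} b \<partial>lborel)"
    using p by (subst nn_integral_cmult[symmetric]) (auto simp: ennreal_mult mult.assoc)
  also have "\<dots> = ennreal (p - 1) * ennreal ((x powr (- p + 1) - s powr (- p + 1)) / (- p + 1))"
    using s p by (subst nn_integral_powr_interval(1)) auto
  also have "\<dots> = ennreal ((p - 1) * ((x powr (- p + 1) - s powr (- p + 1)) / (- p + 1)))"
    using p by (subst ennreal_mult'[of "p - 1"]) auto
  also have "(p - 1) * ((x powr (- p + 1) - s powr (- p + 1)) / (- p + 1)) = s powr (1 - p) - x powr (1 - p)"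
  proof -
    have "- p + 1 \<noteq> 0" using p by simp
    then show ?thesis by (simp add: field_simps)
  qed
  finally show ?thesis .
qed

lemma ennreal_powr_tail_split:
  fixes p s x :: real
  assumes p: "1 < p" and s: "0 < s" "s < x"
  shows "ennreal (s powr p) * (ennreal (s powr (1 - p) - x powr (1 - p)) + ennreal (x powr (1 - p)))
    = ennreal s"
proof -
  have "ennreal (s powr (1 - p) - x powr (1 - p)) + ennreal (x powr (1 - p)) = ennreal (s powr (1 - p))"
    using p s by (subst ennreal_plus[symmetric]) (auto intro!: powr_mono2')
  moreover have "ennreal (s powr p) * ennreal (s powr (1 - p)) = ennreal s"
    using s by (subst ennreal_mult[symmetric]) (auto simp: powr_add[symmetric])
  ultimately show ?thesis by simp
qed

text \<open>Integrating (p - 1) * b powr -p over s < b < x leaves s powr (1 - p) - x powr (1 - p), which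
  the boundary term completes to s powr (1 - p).\<close>
lemma nn_integral_powr_layers:
  fixes u :: "real \<Rightarrow> ennreal" and p x :: real
  assumes u[measurable]: "u \<in> borel_measurable borel" and p: "1 < p" and x: "0 < x"
  shows "(\<integral>\<^sup>+b. ennreal ((p - 1) * b powr - p)
            * (\<integral>\<^sup>+s. ennreal (s powr p) * u s * indicator {0<..<b} s \<partial>lborel)
            * indicator {0<..<x} b \<partial>lborel)
       + ennreal (x powr (1 - p)) * (\<integral>\<^sup>+s. ennreal (s powr p) * u s * indicator {0<..<x} s \<partial>lborel)
     = (\<integral>\<^sup>+s. ennreal s * u s * indicator {0<..<x} s \<partial>lborel)"
proof -
  define B where "B s = ennreal (s powr p) * u s" for s
  define D where "D s = ennreal (s powr (1 - p) - x powr (1 - p))" for s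
  have [measurable]: "B \<in> borel_measurable borel" "D \<in> borel_measurable borel"
    unfolding B_def[abs_def] D_def[abs_def] by measurable
  have "(\<integral>\<^sup>+b. ennreal ((p - 1) * b powr - p) * (\<integral>\<^sup>+s. B s * indicator {0<..<b} s \<partial>lborel)
        * indicator {0<..<x} b \<partial>lborel)
      = (\<integral>\<^sup>+s. B s * (\<integral>\<^sup>+b. ennreal ((p - 1) * b powr - p) * indicator {s<..<x} b \<partial>lborel)
        * indicator {0<..<x} s \<partial>lborel)"
    by (rule nn_integral_triangle_swap) measurable
  also have "\<dots> = (\<integral>\<^sup>+s. B s * D s * indicator {0<..<x} s \<partial>lborel)"
  proof (intro nn_integral_cong)
    fix s :: real
    show "B s * (\<integral>\<^sup>+b. ennreal ((p - 1) * b powr - p) * indicator {s<..<x} b \<partial>lborel)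
        * indicator {0<..<x} s = B s * D s * indicator {0<..<x} s"
      unfolding D_def by (cases "s \<in> {0<..<x}") (simp_all add: nn_integral_powr_tail[OF p])
  qed
  finally have swap: "(\<integral>\<^sup>+b. ennreal ((p - 1) * b powr - p) * (\<integral>\<^sup>+s. B s * indicator {0<..<b} s \<partial>lborel)
        * indicator {0<..<x} b \<partial>lborel) = (\<integral>\<^sup>+s. B s * D s * indicator {0<..<x} s \<partial>lborel)" .
  have "(\<integral>\<^sup>+s. B s * D s * indicator {0<..<x} s \<partial>lborel)
      + ennreal (x powr (1 - p)) * (\<integral>\<^sup>+s. B s * indicator {0<..<x} s \<partial>lborel)
    = (\<integral>\<^sup>+s. B s * D s * indicator {0<..<x} s \<partial>lborel)
      + (\<integral>\<^sup>+s. ennreal (x powr (1 - p)) * (B s * indicator {0<..<x} s) \<partial>lborel)"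
    by (subst nn_integral_cmult) measurable
  also have "\<dots> = (\<integral>\<^sup>+s. B s * D s * indicator {0<..<x} s
      + ennreal (x powr (1 - p)) * (B s * indicator {0<..<x} s) \<partial>lborel)"
    by (rule nn_integral_add[symmetric]) measurable
  also have "\<dots> = (\<integral>\<^sup>+s. ennreal s * u s * indicator {0<..<x} s \<partial>lborel)"
  proof (intro nn_integral_cong)
    fix s :: real
    show "B s * D s * indicator {0<..<x} s + ennreal (x powr (1 - p)) * (B s * indicator {0<..<x} s)
        = ennreal s * u s * indicator {0<..<x} s"
    proof (cases "s \<in> {0<..<x}")
      case True
      then have "B s * D s + ennreal (x powr (1 - p)) * B s = ennreal s * u s"
        using ennreal_powr_tail_split[OF p, of s x] unfolding B_def D_def
        by (metis distrib_left mult.assoc mult.commute greaterThanLessThan_iff)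
      then show ?thesis using True by simp
    qed simp
  qed
  finally show ?thesis unfolding swap[unfolded B_def] B_def .
qed

section \<open>Incentive compatibility along a segment\<close>

lemma le_of_increment_error_bound:
  fixes \<Phi> T :: "real \<Rightarrow> real" and b c K :: real
  assumes bc: "b \<le> c"
    and step: "\<And>x y. b \<le> x \<Longrightarrow> x \<le> y \<Longrightarrow> y \<le> c \<Longrightarrow> \<Phi> x - (T y - T x) * K * (y - x) \<le> \<Phi> y"
  shows "\<Phi> b \<le> \<Phi> c"
proof -
  define D where "D = (T c - T b) * K * (c - b)"
  have "\<Phi> b - D / real n \<le> \<Phi> c" if n: "1 \<le> n" for n :: nat
  proof -
    define h where "h = (c - b) / real n"
    define pt where "pt k = b + real k * h" for k :: nat
    have h: "0 \<le> h" using bc unfolding h_def by simp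
    have pt_Suc: "pt k \<le> pt (Suc k)" for k using h unfolding pt_def by (simp add: distrib_right)
    have pt: "b \<le> pt k \<and> pt k \<le> c" if "k \<le> n" for k
    proof -
      have "real k * h \<le> real n * h" using that h by (intro mult_right_mono) auto
      then show ?thesis using h n bc unfolding pt_def h_def by simp
    qed
    have "\<Phi> b - (T (pt k) - T b) * K * h \<le> \<Phi> (pt k)" if "k \<le> n" for k
      using that
    proof (induction k)
      case (Suc k)
      have "\<Phi> b - (T (pt (Suc k)) - T b) * K * h
          = (\<Phi> b - (T (pt k) - T b) * K * h) - (T (pt (Suc k)) - T (pt k)) * K * (pt (Suc k) - pt k)"
        unfolding pt_def by (simp add: algebra_simps)
      also have "\<dots> \<le> \<Phi> (pt k) - (T (pt (Suc k)) - T (pt k)) * K * (pt (Suc k) - pt k)"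
        using Suc by simp
      also have "\<dots> \<le> \<Phi> (pt (Suc k))"
        using pt[of k] pt[OF Suc.prems] Suc.prems pt_Suc[of k] by (intro step) auto
      finally show ?case .
    qed (simp add: pt_def)
    from this[of n] show ?thesis using n unfolding pt_def h_def D_def by simp
  qed
  moreover have "(\<lambda>n. \<Phi> b - D / real n) \<longlonglongrightarrow> \<Phi> b - 0"
    by (intro tendsto_intros)
  ultimately show ?thesis by (intro LIMSEQ_le_const2[of "\<lambda>n. \<Phi> b - D / real n"]) auto
qed

lemma ic_payment_mono:
  fixes Q T :: "real \<Rightarrow> real"
  assumes b: "0 \<le> b"
    and ic: "\<And>a a'. a \<in> {b..c} \<Longrightarrow> a' \<in> {b..c} \<Longrightarrow> a * Q a' - T a' \<le> a * Q a - T a"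
  shows "mono_on {b..c} T"
proof (rule mono_onI)
  fix a a' assume a: "a \<in> {b..c}" "a' \<in> {b..c}" "a \<le> a'"
  have "(a' - a) * (Q a' - Q a) \<ge> 0" using ic[OF a(1,2)] ic[OF a(2,1)] by (simp add: algebra_simps)
  then have "a * Q a \<le> a * Q a'"
    using a b by (cases "a = a'") (auto simp: zero_le_mult_iff intro: mult_left_mono)
  then show "T a \<le> T a'" using ic[OF a(1,2)] by simp
qed

lemma set_integrable_mono_on_inv_sq:
  fixes T :: "real \<Rightarrow> real"
  assumes b: "0 < b" and T: "mono_on {b..c} T"
  shows "set_integrable lborel {b<..c} (\<lambda>a. T a * a powr -2)"
proof (cases "b \<le> c")
  case True
  define T' where "T' s = T (max b (min c s))" for s
  have "mono T'" unfolding T'_def mono_def using True by (intro allI impI mono_onD[OF T]) auto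
  then have [measurable]: "T' \<in> borel_measurable borel" by (rule borel_measurable_mono)
  have bound: "\<bar>T' s * s powr -2\<bar> \<le> (\<bar>T b\<bar> + \<bar>T c\<bar>) / b\<^sup>2" if "s \<in> {b<..c}" for s
  proof -
    have "T b \<le> T' s" "T' s \<le> T c" unfolding T'_def using True by (auto intro!: mono_onD[OF T])
    then have "\<bar>T' s\<bar> \<le> \<bar>T b\<bar> + \<bar>T c\<bar>" by linarith
    moreover have "s powr -2 \<le> b powr -2" using that b by (intro powr_mono2') auto
    ultimately have "\<bar>T' s\<bar> * s powr -2 \<le> (\<bar>T b\<bar> + \<bar>T c\<bar>) * b powr -2" by (intro mult_mono) auto
    then show ?thesis using b by (simp add: abs_mult powr_minus_divide flip: powr_numeral)
  qed
  have "set_integrable lborel {b<..c} (\<lambda>s. T' s * s powr -2)"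
    unfolding set_integrable_def
  proof (rule Bochner_Integration.integrable_bound)
    show "integrable lborel (\<lambda>s. indicator {b<..c} s * ((\<bar>T b\<bar> + \<bar>T c\<bar>) / b\<^sup>2))"
      using True by (intro integrable_mult_left integrable_real_indicator) (auto simp: emeasure_lborel_Ioc)
    show "AE s in lborel. norm (indicator {b<..c} s *\<^sub>R (T' s * s powr -2))
        \<le> norm (indicator {b<..c} s * ((\<bar>T b\<bar> + \<bar>T c\<bar>) / b\<^sup>2))"
      using bound by (intro AE_I2) (auto split: split_indicator)
  qed simp
  then show ?thesis by (rule set_integrable_cong[THEN iffD1, rotated -1]) (auto simp: T'_def)
qed (simp add: set_integrable_def)

lemma set_integral_mono_inv_sq_le:
  fixes T :: "real \<Rightarrow> real"
  assumes x: "0 < x" "x \<le> y" and T: "\<And>s. s \<in> {x<..y} \<Longrightarrow> T s \<le> T y"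
    and int: "set_integrable lborel {x<..y} (\<lambda>s. T s * s powr -2)"
  shows "(LINT s:{x<..y}|lborel. T s * s powr -2) \<le> T y * (1 / x - 1 / y)"
proof -
  have "(LINT s:{x<..y}|lborel. T s * s powr -2) \<le> (LINT s:{x<..y}|lborel. T y * s powr -2)"
    using x T by (intro set_integral_mono int set_integrable_mult_right inv_sq_integral(1))
      (auto intro!: mult_right_mono)
  then show ?thesis using inv_sq_integral(2)[OF x] by (simp add: set_integral_mult_right)
qed

lemma ic_utility_ratio_increment:
  fixes Q T :: "real \<Rightarrow> real"
  assumes x: "0 < x" "x \<le> y" and ic: "y * Q x - T x \<le> y * Q y - T y"
  shows "T x * (1 / x - 1 / y) \<le> (y * Q y - T y) / y - (x * Q x - T x) / x"
proof -
  have "(y * Q x - T x) / y \<le> (y * Q y - T y) / y" using ic x by (intro divide_right_mono) auto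
  moreover have "(y * Q x - T x) / y - (x * Q x - T x) / x = T x * (1 / x - 1 / y)"
    using x by (simp add: field_simps)
  ultimately show ?thesis by linarith
qed

text \<open>For the utility u a = a * Q a - T a of an incentive compatible menu, formally
  (u a / a)' = T a / a^2 (envelope theorem). Lacking differentiability, the bound is obtained on
  uniform partitions, where monotonicity of T controls the error.\<close>
lemma ic_payment_integral_le:
  fixes Q T :: "real \<Rightarrow> real" and b c :: real
  assumes b: "0 < b" "b \<le> c"
    and ic: "\<And>a a'. a \<in> {b..c} \<Longrightarrow> a' \<in> {b..c} \<Longrightarrow> a * Q a' - T a' \<le> a * Q a - T a"
  shows "(LINT a:{b<..c}|lborel. T a * a powr -2) \<le> (c * Q c - T c) / c - (b * Q b - T b) / b"
proof -
  have T: "mono_on {b..c} T" using b ic by (intro ic_payment_mono[where Q = Q]) auto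
  define I where "I x y = (LINT s:{x<..y}|lborel. T s * s powr -2)" for x y
  define \<phi> where "\<phi> a = (a * Q a - T a) / a" for a
  have int: "set_integrable lborel {x<..y} (\<lambda>s. T s * s powr -2)" if "b \<le> x" "y \<le> c" for x y
    by (rule set_integrable_subset[OF set_integrable_mono_on_inv_sq[OF b(1) T]]) (use that in auto)
  define \<Phi> where "\<Phi> y = \<phi> y - I b y" for y
  have "\<Phi> b \<le> \<Phi> c"
  proof (rule le_of_increment_error_bound[OF b(2)])
    fix x y assume xy: "b \<le> x" "x \<le> y" "y \<le> c"
    have pos: "0 < x" "0 < y" using xy b by auto
    have "I b y = I b x + I x y"
    proof -
      have "{b<..y} = {b<..x} \<union> {x<..y}" using xy by auto
      then show ?thesis unfolding I_def using xy by (simp add: set_integral_Un int)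
    qed
    moreover have "I x y \<le> T y * (1 / x - 1 / y)"
      unfolding I_def using xy pos int by (intro set_integral_mono_inv_sq_le mono_onD[OF T]) auto
    moreover have "T x * (1 / x - 1 / y) \<le> \<phi> y - \<phi> x"
      unfolding \<phi>_def using xy pos ic[of y x] by (intro ic_utility_ratio_increment) auto
    moreover have "(T y - T x) * (1 / x - 1 / y) \<le> (T y - T x) * (1 / b\<^sup>2) * (y - x)"
    proof -
      have "1 / x - 1 / y = (y - x) / (x * y)" using pos by (simp add: field_simps)
      also have "\<dots> \<le> (y - x) / (b * b)" using xy b by (intro divide_left_mono mult_mono) auto
      finally have "(T y - T x) * (1 / x - 1 / y) \<le> (T y - T x) * ((y - x) / (b * b))"
        using mono_onD[OF T, of x y] xy by (intro mult_left_mono) auto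
      then show ?thesis by (simp add: power2_eq_square)
    qed
    ultimately show "\<Phi> x - (T y - T x) * (1 / b\<^sup>2) * (y - x) \<le> \<Phi> y" unfolding \<Phi>_def by argo
  qed
  moreover have "I b b = 0" unfolding I_def set_lebesgue_integral_def by simp
  ultimately show ?thesis unfolding \<Phi>_def I_def \<phi>_def by simp
qed

context
  fixes q t :: "real^'n::finite \<Rightarrow> real^'n"
  assumes adm: "admissible q t"
begin

lemma admissibleD:
  assumes v: "v \<in> cube"
  shows admissible_feasible: "0 \<le> q v $ i" "q v $ i \<le> 1" "(\<Sum>j\<in>UNIV. q v $ j) \<le> 1"
    and admissible_exclusive: "v $ i < vmax v \<Longrightarrow> q v $ i = 0"
    and admissible_DSIC: "x \<in> {0..1} \<Longrightarrow>
      v $ i * q (upd v i x) $ i - t (upd v i x) $ i \<le> v $ i * q v $ i - t v $ i"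
    and admissible_EPIR: "0 \<le> v $ i * q v $ i - t v $ i"
  using adm v unfolding admissible_def feasible_def exclusive_def DSIC_def EPIR_def by auto

lemma admissible_payment_le_allocation:
  assumes v: "v \<in> cube"
  shows "t v $ i \<le> q v $ i"
proof -
  have "t v $ i \<le> v $ i * q v $ i" using admissible_EPIR[OF v, of i] by simp
  also have "\<dots> \<le> q v $ i"
    using admissible_feasible(1,2)[OF v, of i] v unfolding cube_def by (intro mult_left_le_one_le) auto
  finally show ?thesis .
qed

lemma admissible_payment_le_1: "v \<in> cube \<Longrightarrow> t v $ i \<le> 1"
  using admissible_payment_le_allocation admissible_feasible(2) by (rule order_trans)

lemma admissible_revenue_le_1: "v \<in> cube \<Longrightarrow> (\<Sum>j\<in>UNIV. t v $ j) \<le> 1"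
  using admissible_payment_le_allocation admissible_feasible(3) by (meson order_trans sum_mono)

lemma admissible_loser_pays_nothing:
  assumes v: "v \<in> cube" and lose: "v $ j < vmax v"
  shows "t v $ j \<le> 0"
proof -
  have "q v $ j = 0" using admissible_exclusive[OF v lose] .
  then show ?thesis using admissible_EPIR[OF v, of j] by simp
qed

lemma admissible_revenue_emb_le:
  assumes ab: "0 \<le> b" "b < a" "a \<le> 1"
  shows "(\<Sum>j\<in>UNIV. t (emb i a b) $ j) \<le> t (emb i a b) $ i"
proof -
  have v: "emb i a b \<in> cube" using ab by (intro emb_cube) auto
  have "(\<Sum>j\<in>UNIV - {i}. t (emb i a b) $ j) \<le> 0"
    using ab vmax_emb[of b a i] by (intro sum_nonpos admissible_loser_pays_nothing[OF v]) (auto simp: emb_nth)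
  then show ?thesis by (simp add: sum.remove[of _ i])
qed

lemma admissible_revenue_zero: "(\<Sum>j\<in>UNIV. t 0 $ j) \<le> 0"
proof -
  have "0 \<in> cube" unfolding cube_def by simp
  then show ?thesis using admissible_EPIR[of 0] by (intro sum_nonpos) simp
qed

text \<open>Fix the losers' common value b and let the winner's value a range over [b, 1]: DSIC makes
  the winner's menu incentive compatible, and EPIR at a = b and feasibility at a = 1 bound the
  right-hand side of ic_payment_integral_le by 1 - T 1.\<close>
lemma admissible_segment_bound:
  fixes i :: 'n and b :: real
  assumes b: "0 < b" "b < 1"
  defines "T \<equiv> \<lambda>a. t (emb i a b) $ i"
  shows "set_integrable lborel {b<..1} (\<lambda>a. T a * a powr -2)"
    and "(LINT a:{b<..1}|lborel. T a * a powr -2) + T 1 \<le> 1"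
proof -
  define Q where "Q a = q (emb i a b) $ i" for a
  have ic: "a * Q a' - T a' \<le> a * Q a - T a" if "a \<in> {b..1}" "a' \<in> {b..1}" for a a'
  proof -
    have "emb i a b \<in> cube" "a' \<in> {0..1}" using that b by (auto intro: emb_cube)
    from admissible_DSIC[OF this, where i = i] show ?thesis unfolding T_def Q_def by (simp add: upd_emb emb_nth)
  qed
  show "set_integrable lborel {b<..1} (\<lambda>a. T a * a powr -2)"
    using b ic by (intro set_integrable_mono_on_inv_sq ic_payment_mono[where Q = Q]) auto
  have "(LINT a:{b<..1}|lborel. T a * a powr -2) \<le> (1 * Q 1 - T 1) / 1 - (b * Q b - T b) / b"
    using b ic by (intro ic_payment_integral_le) auto
  moreover have "0 \<le> (b * Q b - T b) / b"
    using admissible_EPIR[OF emb_cube[of b b i], of i] b unfolding T_def Q_def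
    by (simp add: emb_nth divide_nonneg_pos)
  moreover have "Q 1 \<le> 1"
    using admissible_feasible(2)[OF emb_cube[of 1 b i], of i] b unfolding Q_def by simp
  ultimately show "(LINT a:{b<..1}|lborel. T a * a powr -2) + T 1 \<le> 1" by simp
qed

end

section \<open>The marginal distribution\<close>

context
  fixes F :: "real measure" and f :: "real \<Rightarrow> real"
  assumes F: "marginal_ok F f"
begin

lemma marginal_ok_prob_space: "prob_space F"
  and marginal_ok_sets: "sets F = sets borel"
  and marginal_ok_unit: "emeasure F {0..1} = 1"
  and marginal_ok_measurable: "f \<in> borel_measurable borel"
  and marginal_ok_nonneg: "x \<in> {0<..<1} \<Longrightarrow> 0 \<le> f x"
  and marginal_ok_density:
    "A \<in> sets borel \<Longrightarrow> A \<subseteq> {0<..<1} \<Longrightarrow> emeasure F A = (\<integral>\<^sup>+x\<in>A. ennreal (f x) \<partial>lborel)"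
  using F unfolding marginal_ok_def by auto

lemma marginal_ok_AE_unit: "AE x in F. x \<in> {0..1}"
proof -
  interpret prob_space F by (rule marginal_ok_prob_space)
  show ?thesis
    using marginal_ok_unit marginal_ok_sets by (intro AE_prob_1) (simp add: emeasure_eq_measure)
qed

lemma nn_integral_density_le_1: "(\<integral>\<^sup>+x. ennreal (f x) * indicator {0<..<1} x \<partial>lborel) \<le> 1"
proof -
  interpret prob_space F by (rule marginal_ok_prob_space)
  have "(\<integral>\<^sup>+x. ennreal (f x) * indicator {0<..<1} x \<partial>lborel) = emeasure F {0<..<1}"
    using marginal_ok_density[of "{0<..<1}"] by simp
  then show ?thesis using emeasure_le_1 by simp
qed

lemma J_eq_nn_integral:
  assumes x: "x \<le> 1"
  shows "ennreal (J n f x)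
    = (\<integral>\<^sup>+s. ennreal (s powr expo n) * ennreal (f s) * indicator {0<..<x} s \<partial>lborel)"
proof -
  note [measurable] = marginal_ok_measurable
  have nonneg: "0 \<le> indicator {0<..<x} s * (s powr expo n * f s)" for s
    using marginal_ok_nonneg[of s] x by (auto split: split_indicator)
  have "(\<integral>\<^sup>+s. ennreal (indicator {0<..<x} s * (s powr expo n * f s)) \<partial>lborel)
      \<le> (\<integral>\<^sup>+s. ennreal (f s) * indicator {0<..<1} s \<partial>lborel)"
  proof (intro nn_integral_mono)
    fix s :: real
    show "ennreal (indicator {0<..<x} s * (s powr expo n * f s)) \<le> ennreal (f s) * indicator {0<..<1} s"
    proof (cases "s \<in> {0<..<x}")
      case True
      then have "s powr expo n \<le> 1" using x expo_nonneg[of n] by (intro powr_le1) auto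
      then have "s powr expo n * f s \<le> f s"
        using True x marginal_ok_nonneg[of s] by (intro mult_left_le_one_le) auto
      then show ?thesis using True x by (auto intro: ennreal_leI)
    qed simp
  qed
  also have "\<dots> \<le> 1" by (rule nn_integral_density_le_1)
  finally have "(\<integral>\<^sup>+s. ennreal (indicator {0<..<x} s * (s powr expo n * f s)) \<partial>lborel) < \<top>"
    by (rule le_less_trans) simp
  then have "integrable lborel (\<lambda>s. indicator {0<..<x} s * (s powr expo n * f s))"
    using nonneg by (intro integrableI_nonneg) auto
  then have "ennreal (J n f x) = (\<integral>\<^sup>+s. ennreal (indicator {0<..<x} s * (s powr expo n * f s)) \<partial>lborel)"
    unfolding J_def set_lebesgue_integral_def real_scaleR_def using nonneg
    by (intro nn_integral_eq_integral[symmetric]) auto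
  also have "\<dots> = (\<integral>\<^sup>+s. ennreal (s powr expo n) * ennreal (f s) * indicator {0<..<x} s \<partial>lborel)"
    using marginal_ok_nonneg x
    by (intro nn_integral_cong) (auto simp: ennreal_mult split: split_indicator)
  finally show ?thesis .
qed

lemma J_nonneg: "x \<le> 1 \<Longrightarrow> 0 \<le> J n f x"
  unfolding J_def set_lebesgue_integral_def using marginal_ok_nonneg
  by (intro integral_nonneg_AE AE_I2) (auto split: split_indicator)

lemma borel_measurable_J: "J n f \<in> borel_measurable borel"
proof -
  note [measurable] = marginal_ok_measurable
  have "(\<lambda>(x, s). indicator {0<..<x} s *\<^sub>R (s powr expo n * f s))
      = (\<lambda>p::real \<times> real. of_bool (0 < snd p \<and> snd p < fst p) * (snd p powr expo n * f (snd p)))"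
    by (auto simp: fun_eq_iff split: split_indicator)
  also have "\<dots> \<in> borel_measurable (borel \<Otimes>\<^sub>M lborel)" by measurable
  finally show ?thesis
    unfolding J_def[abs_def] set_lebesgue_integral_def by (rule lborel.borel_measurable_lebesgue_integral)
qed

lemma nn_integral_marginal_interior:
  assumes u: "u \<in> borel_measurable borel"
  shows "(\<integral>\<^sup>+x. u x * indicator {0<..<1} x \<partial>F)
    = (\<integral>\<^sup>+x. u x * ennreal (f x) * indicator {0<..<1} x \<partial>lborel)"
proof -
  note [measurable] = marginal_ok_measurable
  have sets: "sets F = sets borel" by (rule marginal_ok_sets)
  have eq: "density F (indicator {0<..<1}) = density lborel (\<lambda>x. ennreal (f x) * indicator {0<..<1} x)"
  proof (rule measure_eqI)
    fix A assume "A \<in> sets (density F (indicator {0<..<1}))"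
    then have A: "A \<in> sets borel" using sets by simp
    have "emeasure (density F (indicator {0<..<1})) A = emeasure F (A \<inter> {0<..<1})"
      using A sets by (subst emeasure_density) (auto cong: measurable_cong_sets
          simp: nn_integral_indicator[symmetric] indicator_inter_arith mult_ac intro!: nn_integral_cong)
    also have "\<dots> = emeasure (density lborel (\<lambda>x. ennreal (f x) * indicator {0<..<1} x)) A"
      using A by (subst emeasure_density)
        (auto simp: marginal_ok_density intro!: nn_integral_cong split: split_indicator)
    finally show "emeasure (density F (indicator {0<..<1})) A
      = emeasure (density lborel (\<lambda>x. ennreal (f x) * indicator {0<..<1} x)) A" .
  qed (use sets in simp)
  have "(\<integral>\<^sup>+x. u x * indicator {0<..<1} x \<partial>F) = (\<integral>\<^sup>+x. u x \<partial>density F (indicator {0<..<1}))"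
    using u sets by (subst nn_integral_density) (auto simp: mult.commute cong: measurable_cong_sets)
  also have "\<dots> = (\<integral>\<^sup>+x. u x * ennreal (f x) * indicator {0<..<1} x \<partial>lborel)"
    unfolding eq using u by (subst nn_integral_density) (auto simp: mult_ac)
  finally show ?thesis .
qed

lemma integral_powr_expo: "(\<integral>x. x powr expo n \<partial>F) = J n f 1 + measure F {1}"
proof -
  interpret prob_space F by (rule marginal_ok_prob_space)
  note [measurable] = marginal_ok_measurable
  have sets: "sets F = sets borel" by (rule marginal_ok_sets)
  have "AE x in F. ennreal (x powr expo n)
      = ennreal (x powr expo n) * indicator {0<..<1} x + indicator {1} x"
    using marginal_ok_AE_unit by eventually_elim (auto split: split_indicator)
  then have "(\<integral>\<^sup>+x. ennreal (x powr expo n) \<partial>F)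
      = (\<integral>\<^sup>+x. ennreal (x powr expo n) * indicator {0<..<1} x + indicator {1} x \<partial>F)"
    by (rule nn_integral_cong_AE)
  also have "\<dots> = (\<integral>\<^sup>+x. ennreal (x powr expo n) * indicator {0<..<1} x \<partial>F) + emeasure F {1}"
    using sets by (subst nn_integral_add) (auto cong: measurable_cong_sets)
  also have "(\<integral>\<^sup>+x. ennreal (x powr expo n) * indicator {0<..<1} x \<partial>F) = ennreal (J n f 1)"
    unfolding nn_integral_marginal_interior[of "\<lambda>x. ennreal (x powr expo n)", simplified]
    by (simp add: J_eq_nn_integral)
  finally have nn: "(\<integral>\<^sup>+x. ennreal (x powr expo n) \<partial>F) = ennreal (J n f 1 + measure F {1})"
    using J_nonneg[of 1 n] by (simp add: emeasure_eq_measure ennreal_plus)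
  have "(\<integral>x. x powr expo n \<partial>F) = enn2real (\<integral>\<^sup>+x. ennreal (x powr expo n) \<partial>F)"
    using sets by (intro integral_eq_nn_integral) (auto cong: measurable_cong_sets)
  also have "\<dots> = J n f 1 + measure F {1}"
    unfolding nn using J_nonneg[of 1 n] by (intro enn2real_ennreal) simp
  finally show ?thesis .
qed

lemma integrable_powr_expo: "integrable F (\<lambda>x. x powr expo (n::'n::finite itself))"
proof -
  interpret prob_space F by (rule marginal_ok_prob_space)
  show ?thesis
  proof (rule integrable_const_bound[where B = 1])
    show "AE x in F. norm (x powr expo n) \<le> 1"
      using marginal_ok_AE_unit by eventually_elim (auto intro: powr_le1 simp: expo_nonneg)
  qed (use marginal_ok_sets in \<open>auto cong: measurable_cong_sets\<close>)
qed

lemma J_le_of_sq_bound: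
  assumes x: "x \<in> {0<..<1}" and e: "1 < expo n" and C: "0 \<le> C"
    and bound: "\<And>s. s \<in> {0<..<x} \<Longrightarrow> s\<^sup>2 * f s \<le> C"
  shows "J n f x \<le> C * (x powr (expo n - 1) / (expo n - 1))"
proof -
  define e where "e = expo n"
  have "((\<lambda>s. C * s powr (e - 2)) has_integral (C * (x powr (e - 2 + 1) / (e - 2 + 1)))) {0..x}"
    using e x unfolding e_def by (intro has_integral_mult_right has_integral_powr_from_0) auto
  then have C_int: "(\<integral>\<^sup>+s. ennreal (C * s powr (e - 2)) * indicator {0..x} s \<partial>lborel)
      = ennreal (C * (x powr (e - 1) / (e - 1)))"
    using C by (subst nn_integral_has_integral_lebesgue') auto
  have "ennreal (J n f x) = (\<integral>\<^sup>+s. ennreal (s powr e) * ennreal (f s) * indicator {0<..<x} s \<partial>lborel)"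
    unfolding e_def using x by (intro J_eq_nn_integral) auto
  also have "\<dots> \<le> (\<integral>\<^sup>+s. ennreal (C * s powr (e - 2)) * indicator {0..x} s \<partial>lborel)"
  proof (intro nn_integral_mono)
    fix s :: real
    show "ennreal (s powr e) * ennreal (f s) * indicator {0<..<x} s
        \<le> ennreal (C * s powr (e - 2)) * indicator {0..x} s"
    proof (cases "s \<in> {0<..<x}")
      case True
      then have "s powr (e - 2) * (s\<^sup>2 * f s) \<le> s powr (e - 2) * C" using bound by (intro mult_left_mono) auto
      moreover have "s powr (e - 2) * s\<^sup>2 = s powr e"
        using True by (simp add: powr_add[symmetric] flip: powr_numeral)
      ultimately have "s powr e * f s \<le> C * s powr (e - 2)" by (simp add: algebra_simps)
      then show ?thesis
        using True x marginal_ok_nonneg[of s] by (auto simp: ennreal_mult[symmetric] intro: ennreal_leI)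
    qed simp
  qed
  finally show ?thesis
    unfolding C_int e_def[symmetric] using C e x unfolding e_def by (subst (asm) ennreal_le_iff) auto
qed

lemma regII_imp_regI:
  assumes N: "CARD('n::finite) \<ge> 2" and R: "regII TYPE('n) F f"
  shows "regI TYPE('n) F f"
proof -
  define e where "e = expo TYPE('n)"
  define n where "n = real CARD('n)"
  have n: "2 \<le> n" using N unfolding n_def by simp
  have en: "e - 1 = 1 / (n - 1)" unfolding e_def expo_eq[OF N] n_def by simp
  have mono: "mono_on {0<..<1} (\<lambda>x. x\<^sup>2 * f x)" using R unfolding regII_def by simp
  have "f x \<ge> x powr (-1 - e) / (n - 1) * J TYPE('n) f x" if x: "x \<in> {0<..<1}" for x
  proof -
    have "J TYPE('n) f x \<le> x\<^sup>2 * f x * (x powr (e - 1) / (e - 1))"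
      unfolding e_def using x marginal_ok_nonneg[OF x] expo_gt_1[OF N] mono
      by (intro J_le_of_sq_bound) (auto simp: mono_on_def)
    then have "x powr (-1 - e) / (n - 1) * J TYPE('n) f x
        \<le> x powr (-1 - e) / (n - 1) * (x\<^sup>2 * f x * (x powr (e - 1) / (e - 1)))"
      using n by (intro mult_left_mono) auto
    also have "\<dots> = x powr (-1 - e) * x\<^sup>2 * x powr (e - 1) * f x"
      unfolding en using n by (simp add: field_simps)
    also have "x powr (-1 - e) * x\<^sup>2 * x powr (e - 1) = 1"
      using x by (simp add: powr_add[symmetric] flip: powr_numeral)
    finally show ?thesis by simp
  qed
  then show ?thesis using R unfolding regI_def regII_def e_def n_def by auto
qed

end

lemma nn_integral_marginal:
  assumes F: "marginal_ok F f" and u[measurable]: "u \<in> borel_measurable borel"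
  shows "(\<integral>\<^sup>+x. u x \<partial>F) = ennreal (measure F {0}) * u 0
    + (\<integral>\<^sup>+x. ennreal (f x) * indicator {0<..<1} x * u x \<partial>lborel) + ennreal (measure F {1}) * u 1"
proof -
  interpret prob_space F by (rule marginal_ok_prob_space[OF F])
  have sets: "sets F = sets borel" by (rule marginal_ok_sets[OF F])
  have "AE x in F. u x = u 0 * indicator {0} x + u x * indicator {0<..<1} x + u 1 * indicator {1} x"
    using marginal_ok_AE_unit[OF F] by eventually_elim (auto split: split_indicator)
  then have "(\<integral>\<^sup>+x. u x \<partial>F)
      = (\<integral>\<^sup>+x. u 0 * indicator {0} x + u x * indicator {0<..<1} x + u 1 * indicator {1} x \<partial>F)"
    by (rule nn_integral_cong_AE)
  also have "\<dots> = u 0 * emeasure F {0} + (\<integral>\<^sup>+x. u x * indicator {0<..<1} x \<partial>F) + u 1 * emeasure F {1}"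
    using sets by (simp add: nn_integral_add nn_integral_cmult_indicator cong: measurable_cong_sets)
  also have "(\<integral>\<^sup>+x. u x * indicator {0<..<1} x \<partial>F)
      = (\<integral>\<^sup>+x. ennreal (f x) * indicator {0<..<1} x * u x \<partial>lborel)"
    by (simp add: nn_integral_marginal_interior[OF F u] mult_ac)
  finally show ?thesis by (simp add: emeasure_eq_measure mult_ac)
qed

lemma PiF_distr: "\<pi> \<in> PiF F \<Longrightarrow> distr \<pi> borel (\<lambda>v. v $ i) = F"
  and PiF_prob_space: "\<pi> \<in> PiF F \<Longrightarrow> prob_space \<pi>"
  and PiF_sets: "\<pi> \<in> PiF F \<Longrightarrow> sets \<pi> = sets borel"
  unfolding PiF_def by auto

lemma PiF_coord_measurable:
  assumes "\<pi> \<in> PiF F"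
  shows "(\<lambda>v. v $ i) \<in> \<pi> \<rightarrow>\<^sub>M borel"
  using PiF_sets[OF assms] by (simp cong: measurable_cong_sets)

lemma PiF_integral_coord:
  fixes h :: "real \<Rightarrow> real"
  assumes \<pi>: "\<pi> \<in> PiF F" and h: "h \<in> borel_measurable borel"
  shows "(\<integral>v. h (v $ i) \<partial>\<pi>) = (\<integral>x. h x \<partial>F)"
    and "integrable \<pi> (\<lambda>v. h (v $ i)) \<longleftrightarrow> integrable F h"
proof -
  have m: "(\<lambda>v. v $ i) \<in> \<pi> \<rightarrow>\<^sub>M borel" by (rule PiF_coord_measurable[OF \<pi>])
  have "integral\<^sup>L (distr \<pi> borel (\<lambda>v. v $ i)) h = (\<integral>v. h (v $ i) \<partial>\<pi>)"
    by (rule integral_distr) (use m h in auto)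
  then show "(\<integral>v. h (v $ i) \<partial>\<pi>) = (\<integral>x. h x \<partial>F)"
    unfolding PiF_distr[OF \<pi>] by simp
  have "integrable (distr \<pi> borel (\<lambda>v. v $ i)) h \<longleftrightarrow> integrable \<pi> (\<lambda>v. h (v $ i))"
    by (rule integrable_distr_eq) (use m h in auto)
  then show "integrable \<pi> (\<lambda>v. h (v $ i)) \<longleftrightarrow> integrable F h"
    unfolding PiF_distr[OF \<pi>] by simp
qed

lemma PiF_AE_cube:
  assumes F: "marginal_ok F f" and \<pi>: "\<pi> \<in> PiF F"
  shows "AE v in \<pi>. (v::real^'n::finite) \<in> cube"
proof -
  have "AE v in \<pi>. v $ i \<in> {0..1}" for i
    using marginal_ok_AE_unit[OF F] unfolding PiF_distr[OF \<pi>, of i, symmetric]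
    by (subst (asm) AE_distr_iff) (auto intro: PiF_coord_measurable[OF \<pi>])
  then have "AE v in \<pi>. \<forall>i. v $ i \<in> {0..1}" by (subst AE_all_countable) auto
  then show ?thesis unfolding cube_def by simp
qed

lemma integral_mean_powr_PiF:
  assumes F: "marginal_ok F f" and \<pi>: "\<pi> \<in> PiF F"
  shows "integrable \<pi> (\<lambda>v::real^'n. (\<Sum>j\<in>UNIV. v $ j powr expo TYPE('n)) / real CARD('n))"
    and "(\<integral>v. (\<Sum>j\<in>UNIV. v $ j powr expo TYPE('n)) / real CARD('n) \<partial>\<pi>) = (\<integral>x. x powr expo TYPE('n) \<partial>F)"
proof -
  have coord: "integrable \<pi> (\<lambda>v::real^'n. v $ j powr expo TYPE('n))"
      "(\<integral>v. v $ j powr expo TYPE('n) \<partial>\<pi>) = (\<integral>x. x powr expo TYPE('n) \<partial>F)" for j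
    using PiF_integral_coord[OF \<pi>, of "\<lambda>x. x powr expo TYPE('n)" j]
      integrable_powr_expo[OF F, where n = "TYPE('n)"] by simp_all
  then show "integrable \<pi> (\<lambda>v::real^'n. (\<Sum>j\<in>UNIV. v $ j powr expo TYPE('n)) / real CARD('n))"
    by simp
  show "(\<integral>v. (\<Sum>j\<in>UNIV. v $ j powr expo TYPE('n)) / real CARD('n) \<partial>\<pi>) = (\<integral>x. x powr expo TYPE('n) \<partial>F)"
    using coord by (simp add: Bochner_Integration.integral_sum)
qed

section \<open>The adversarial correlation structure\<close>

lemma borel_measurable_hdens:
  assumes F: "marginal_ok F f"
  shows "hdens n f \<in> borel_measurable borel"
proof -
  note [measurable] = marginal_ok_measurable[OF F] borel_measurable_J[OF F]
  show ?thesis unfolding hdens_def[abs_def] by measurable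
qed

lemma hdens_nonneg:
  assumes R: "regI TYPE('n::finite) F f" and y: "y \<in> {0<..<1}"
  shows "0 \<le> hdens TYPE('n) f y"
proof -
  have "y powr (- expo TYPE('n)) / (real CARD('n) - 1) * J TYPE('n) f y
      = y * (y powr (-1 - expo TYPE('n)) / (real CARD('n) - 1) * J TYPE('n) f y)"
    using y by (simp add: powr_mult_base)
  also have "\<dots> \<le> y * f y" using R y unfolding regI_def by (intro mult_left_mono) auto
  finally show ?thesis unfolding hdens_def by simp
qed

lemma nn_integral_id_density_finite:
  assumes F: "marginal_ok F f" and x: "x \<le> 1"
  shows "(\<integral>\<^sup>+s. ennreal s * ennreal (f s) * indicator {0<..<x} s \<partial>lborel) < \<infinity>"
proof -
  have "(\<integral>\<^sup>+s. ennreal s * ennreal (f s) * indicator {0<..<x} s \<partial>lborel)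
      \<le> (\<integral>\<^sup>+s. ennreal (f s) * indicator {0<..<1} s \<partial>lborel)"
    using x marginal_ok_nonneg[OF F]
    by (intro nn_integral_mono)
      (auto split: split_indicator simp: ennreal_mult[symmetric] intro!: ennreal_leI mult_left_le_one_le)
  also have "\<dots> \<le> 1" by (rule nn_integral_density_le_1[OF F])
  finally show ?thesis by (simp add: le_less_trans)
qed

lemma nn_integral_J_layers:
  assumes N: "CARD('n::finite) \<ge> 2" and F: "marginal_ok F f" and x: "0 < x" "x \<le> 1"
  shows "(\<integral>\<^sup>+b. ennreal (b powr - expo TYPE('n) / (real CARD('n) - 1) * J TYPE('n) f b)
      * indicator {0<..<x} b \<partial>lborel) + ennreal (x powr (1 - expo TYPE('n)) * J TYPE('n) f x)
    = (\<integral>\<^sup>+s. ennreal s * ennreal (f s) * indicator {0<..<x} s \<partial>lborel)"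
proof -
  define e where "e = expo TYPE('n)"
  note [measurable] = marginal_ok_measurable[OF F] borel_measurable_J[OF F]
  have e: "1 < e" unfolding e_def by (rule expo_gt_1[OF N])
  have e1: "e - 1 = 1 / (real CARD('n) - 1)" unfolding e_def expo_eq[OF N] by simp
  have J: "ennreal (J TYPE('n) f b)
      = (\<integral>\<^sup>+s. ennreal (s powr e) * ennreal (f s) * indicator {0<..<b} s \<partial>lborel)" if "b \<le> 1" for b
    unfolding e_def using that by (rule J_eq_nn_integral[OF F])
  have "(\<integral>\<^sup>+b. ennreal (b powr - e / (real CARD('n) - 1) * J TYPE('n) f b) * indicator {0<..<x} b \<partial>lborel)
    = (\<integral>\<^sup>+b. ennreal ((e - 1) * b powr - e)
        * (\<integral>\<^sup>+s. ennreal (s powr e) * ennreal (f s) * indicator {0<..<b} s \<partial>lborel)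
        * indicator {0<..<x} b \<partial>lborel)"
    unfolding e1
  proof (intro nn_integral_cong)
    fix b :: real
    show "ennreal (b powr - e / (real CARD('n) - 1) * J TYPE('n) f b) * indicator {0<..<x} b
      = ennreal (1 / (real CARD('n) - 1) * b powr - e)
        * (\<integral>\<^sup>+s. ennreal (s powr e) * ennreal (f s) * indicator {0<..<b} s \<partial>lborel)
        * indicator {0<..<x} b"
    proof (cases "b \<in> {0<..<x}")
      case True
      then have "b \<le> 1" using x by simp
      have "ennreal (b powr - e / (real CARD('n) - 1) * J TYPE('n) f b)
          = ennreal (1 / (real CARD('n) - 1) * b powr - e) * ennreal (J TYPE('n) f b)"
        using N J_nonneg[OF F \<open>b \<le> 1\<close>] by (subst ennreal_mult[symmetric]) auto
      then show ?thesis using True unfolding J[OF \<open>b \<le> 1\<close>] by simp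
    qed simp
  qed
  moreover have "ennreal (x powr (1 - e) * J TYPE('n) f x)
      = ennreal (x powr (1 - e)) * (\<integral>\<^sup>+s. ennreal (s powr e) * ennreal (f s) * indicator {0<..<x} s \<partial>lborel)"
    unfolding J[OF x(2), symmetric] using x J_nonneg[OF F x(2)] by (intro ennreal_mult) auto
  ultimately show ?thesis unfolding e_def[symmetric] using x e by (simp add: nn_integral_powr_layers)
qed

lemma nn_integral_sum_measures:
  assumes fin: "finite K" and sets: "\<And>k. k \<in> K \<Longrightarrow> sets (\<nu> k) = sets M"
    and em: "\<And>A. A \<in> sets M \<Longrightarrow> emeasure M A = (\<Sum>k\<in>K. emeasure (\<nu> k) A)"
    and g: "g \<in> borel_measurable M"
  shows "(\<integral>\<^sup>+x. g x \<partial>M) = (\<Sum>k\<in>K. \<integral>\<^sup>+x. g x \<partial>\<nu> k)"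
  using g
proof (induction rule: borel_measurable_induct)
  case (cong u v)
  have space: "k \<in> K \<Longrightarrow> space (\<nu> k) = space M" for k using sets by (rule sets_eq_imp_space_eq)
  have "(\<integral>\<^sup>+x. u x \<partial>M) = (\<integral>\<^sup>+x. v x \<partial>M)" using cong(3) by (intro nn_integral_cong) auto
  also have "\<dots> = (\<Sum>k\<in>K. \<integral>\<^sup>+x. u x \<partial>\<nu> k)"
    unfolding cong(4) using cong(3) space by (intro sum.cong refl nn_integral_cong) auto
  finally show ?case .
next
  case (set A)
  then show ?case using sets by (simp add: em)
next
  case (mult u c)
  have "k \<in> K \<Longrightarrow> u \<in> borel_measurable (\<nu> k)" for k
    using mult(2) sets[of k] by (simp cong: measurable_cong_sets)
  then show ?case
    using mult by (simp add: nn_integral_cmult sum_distrib_left)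
next
  case (add u v)
  have "k \<in> K \<Longrightarrow> u \<in> borel_measurable (\<nu> k) \<and> v \<in> borel_measurable (\<nu> k)" for k
    using add(1,3) sets[of k] by (simp cong: measurable_cong_sets)
  then show ?case
    using add by (simp add: nn_integral_add sum.distrib)
next
  case (seq U)
  have meas: "k \<in> K \<Longrightarrow> U i \<in> borel_measurable (\<nu> k)" for k i
    using seq(1) sets[of k] by (simp cong: measurable_cong_sets)
  have "(\<integral>\<^sup>+x. (\<Squnion>i. U i x) \<partial>M) = (\<Squnion>i. \<Sum>k\<in>K. \<integral>\<^sup>+x. U i x \<partial>\<nu> k)"
    using seq by (simp add: nn_integral_monotone_convergence_SUP)
  also have "\<dots> = (\<Sum>k\<in>K. \<Squnion>i. \<integral>\<^sup>+x. U i x \<partial>\<nu> k)"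
    using \<open>incseq U\<close> by (intro ennreal_SUP_sum) (auto simp: incseq_def le_fun_def intro!: nn_integral_mono)
  also have "\<dots> = (\<Sum>k\<in>K. \<integral>\<^sup>+x. (\<Squnion>i. U i x) \<partial>\<nu> k)"
    using \<open>incseq U\<close> meas by (intro sum.cong refl nn_integral_monotone_convergence_SUP[symmetric]) auto
  finally show ?case by (simp add: image_comp)
qed

lemma sum_UNIV_option_bool:
  "(\<Sum>k\<in>UNIV. \<phi> k) = \<phi> (None, False) + \<phi> (None, True)
     + (\<Sum>i\<in>UNIV. \<phi> (Some i, False)) + (\<Sum>i\<in>UNIV. \<phi> (Some i, True))"
  for \<phi> :: "'n::finite option \<times> bool \<Rightarrow> 'a::comm_monoid_add"
proof -
  have "(\<Sum>k\<in>UNIV. \<phi> k) = (\<Sum>z\<in>UNIV. \<phi> (z, False) + \<phi> (z, True))"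
    unfolding UNIV_Times_UNIV[symmetric] sum.cartesian_product' UNIV_bool by simp
  also have "\<dots> = \<phi> (None, False) + \<phi> (None, True) + (\<Sum>i\<in>UNIV. \<phi> (Some i, False) + \<phi> (Some i, True))"
    unfolding UNIV_option_conv by (simp add: sum.reindex)
  finally show ?thesis by (simp add: sum.distrib add.assoc)
qed

lemma borel_measurable_emb_pair[measurable]:
  "(\<lambda>p::real \<times> real. emb i (fst p) (snd p)) \<in> borel_measurable borel"
  unfolding emb_def
proof (intro borel_measurable_continuous_onI continuous_on_vec_lambda)
  show "continuous_on UNIV (\<lambda>p::real \<times> real. if j = i then fst p else snd p)" for j
    by (cases "j = i") (auto intro: continuous_intros)
qed

lemma borel_measurable_emb_one[measurable]: "emb i 1 \<in> borel_measurable borel"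
  unfolding emb_def
proof (intro borel_measurable_continuous_onI continuous_on_vec_lambda)
  show "continuous_on UNIV (\<lambda>b::real. if j = i then 1 else b)" for j
    by (cases "j = i") (auto intro: continuous_intros)
qed

text \<open>The profiles emb i a b charged by pistar are parametrised by the winner's value a = v(1) and
  the common value b = v(2) of the other bidders. tri_density and edge_density are the densities of
  the paper for a < 1 and a = 1, corner_mass is the atom at (1, ..., 1).\<close>
definition triangle :: "(real \<times> real) set" where
  "triangle = {(a, b). 0 < b \<and> b \<le> a \<and> a < 1}"

lemma triangle_borel[measurable]: "triangle \<in> sets borel"
proof -
  have "Measurable.pred (borel \<Otimes>\<^sub>M borel) (\<lambda>p::real \<times> real. 0 < snd p \<and> snd p \<le> fst p \<and> fst p < 1)"
    by measurable
  then have "{p::real \<times> real. 0 < snd p \<and> snd p \<le> fst p \<and> fst p < 1} \<in> sets (borel \<Otimes>\<^sub>M borel)"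
    unfolding pred_def by (simp add: space_pair_measure)
  then show ?thesis unfolding triangle_def borel_prod by (simp add: case_prod_beta')
qed

definition tri_density :: "'n::finite itself \<Rightarrow> (real \<Rightarrow> real) \<Rightarrow> real \<times> real \<Rightarrow> real" where
  "tri_density n f p = 1 / ((real CARD('n) - 1) * (fst p)\<^sup>2) * hdens n f (snd p)"

definition edge_density :: "'n::finite itself \<Rightarrow> (real \<Rightarrow> real) \<Rightarrow> real \<Rightarrow> real" where
  "edge_density n f b = 1 / (real CARD('n) - 1) * hdens n f b"

definition corner_mass :: "'n::finite itself \<Rightarrow> real measure \<Rightarrow> (real \<Rightarrow> real) \<Rightarrow> real" where
  "corner_mass n F f = measure F {1} - 1 / (real CARD('n) - 1) * J n f 1"

lemma corner_mass_nonneg: "regI n F f \<Longrightarrow> 0 \<le> corner_mass n F f"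
  unfolding regI_def corner_mass_def by simp

definition pistar_integral ::
  "'n::finite itself \<Rightarrow> real measure \<Rightarrow> (real \<Rightarrow> real) \<Rightarrow> (real^'n \<Rightarrow> ennreal) \<Rightarrow> ennreal" where
  "pistar_integral n F f g =
     ennreal (measure F {0}) * g 0
   + (\<Sum>i\<in>UNIV. \<integral>\<^sup>+p. ennreal (tri_density n f p) * indicator triangle p * g (emb i (fst p) (snd p)) \<partial>lborel)
   + (\<Sum>i\<in>UNIV. \<integral>\<^sup>+b. ennreal (edge_density n f b) * indicator {0<..<1} b * g (emb i 1 b) \<partial>lborel)
   + ennreal (corner_mass n F f) * g 1"

lemma pistar_em_eq_pistar_integral: "pistar_em n F f A = pistar_integral n F f (indicator A)"
  unfolding pistar_em_def pistar_integral_def tri_density_def edge_density_def corner_mass_def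
    triangle_def
  by (simp add: mult_ac)

text \<open>pistar is a sum of measures indexed by 'n option \<times> bool: the point masses at 0 (None, False)
  and at 1 (None, True), and for each bidder i the images under emb i of the densities on the
  triangle (Some i, False) and on the edge a = 1 (Some i, True).\<close>
definition pistar_part ::
  "'n::finite itself \<Rightarrow> real measure \<Rightarrow> (real \<Rightarrow> real) \<Rightarrow> 'n option \<times> bool \<Rightarrow> (real^'n) measure" where
  "pistar_part n F f k = (case k of
      (None, False) \<Rightarrow> density (return borel 0) (\<lambda>_. ennreal (measure F {0}))
    | (None, True) \<Rightarrow> density (return borel 1) (\<lambda>_. ennreal (corner_mass n F f))
    | (Some i, False) \<Rightarrow> distr (density lborel (\<lambda>p. ennreal (tri_density n f p) * indicator triangle p))
        borel (\<lambda>p. emb i (fst p) (snd p))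
    | (Some i, True) \<Rightarrow> distr (density lborel (\<lambda>b. ennreal (edge_density n f b) * indicator {0<..<1} b))
        borel (emb i 1))"

lemma sets_pistar_part: "sets (pistar_part n F f k) = sets borel"
  unfolding pistar_part_def by (simp split: prod.split option.split bool.split)

lemma sets_pistar: "sets (pistar n F f) = sets borel"
  unfolding pistar_def using sets.sigma_sets_eq[of "borel :: (real^'n) measure"] by simp

lemma space_pistar: "space (pistar n F f) = UNIV"
  unfolding pistar_def by simp

context
  fixes F :: "real measure" and f :: "real \<Rightarrow> real"
  assumes F: "marginal_ok F f"
begin

lemma borel_measurable_tri_density[measurable]: "tri_density n f \<in> borel_measurable borel"
proof -
  note [measurable] = borel_measurable_hdens[OF F]
  show ?thesis unfolding tri_density_def[abs_def] borel_prod[symmetric] by measurable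
qed

lemma borel_measurable_edge_density[measurable]: "edge_density n f \<in> borel_measurable borel"
proof -
  note [measurable] = borel_measurable_hdens[OF F]
  show ?thesis unfolding edge_density_def[abs_def] by measurable
qed

lemma pistar_integral_eq_sum_parts:
  fixes g :: "real^'n::finite \<Rightarrow> ennreal"
  assumes g[measurable]: "g \<in> borel_measurable borel"
  shows "pistar_integral TYPE('n) F f g = (\<Sum>k\<in>UNIV. \<integral>\<^sup>+x. g x \<partial>pistar_part TYPE('n) F f k)"
  unfolding sum_UNIV_option_bool pistar_integral_def pistar_part_def
  by (simp add: nn_integral_density nn_integral_return nn_integral_distr add_ac)

lemma pistar_em_eq_sum_parts:
  assumes "A \<in> sets borel"
  shows "pistar_em TYPE('n::finite) F f A = (\<Sum>k\<in>UNIV. emeasure (pistar_part TYPE('n) F f k) A)"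
  using assms unfolding pistar_em_eq_pistar_integral
  by (subst pistar_integral_eq_sum_parts) (auto simp: sets_pistar_part intro!: sum.cong)

lemma emeasure_pistar:
  assumes A: "A \<in> sets borel"
  shows "emeasure (pistar TYPE('n::finite) F f) A = pistar_em TYPE('n) F f A"
  unfolding pistar_def
proof (rule emeasure_measure_of_sigma)
  note parts = pistar_em_eq_sum_parts
  show "countably_additive (sets borel) (pistar_em TYPE('n) F f)"
    unfolding countably_additive_def
  proof (intro allI impI)
    fix B :: "nat \<Rightarrow> (real^'n) set"
    assume B: "range B \<subseteq> sets borel" "disjoint_family B" "\<Union>(range B) \<in> sets borel"
    have "(\<Sum>j. pistar_em TYPE('n) F f (B j)) = (\<Sum>k\<in>UNIV. \<Sum>j. emeasure (pistar_part TYPE('n) F f k) (B j))"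
      using B(1) by (subst parts) (auto intro!: suminf_sum)
    also have "\<dots> = pistar_em TYPE('n) F f (\<Union>(range B))"
      using B by (subst parts) (auto simp: sets_pistar_part intro!: sum.cong suminf_emeasure)
    finally show "(\<Sum>j. pistar_em TYPE('n) F f (B j)) = pistar_em TYPE('n) F f (\<Union>(range B))" .
  qed
  show "positive (sets borel) (pistar_em TYPE('n) F f)"
    unfolding positive_def pistar_em_eq_pistar_integral pistar_integral_def by simp
qed (use A sets.sigma_algebra_axioms[of "borel :: (real^'n) measure"] in simp_all)

lemma nn_integral_pistar:
  assumes g: "g \<in> borel_measurable borel"
  shows "(\<integral>\<^sup>+x. g x \<partial>pistar TYPE('n::finite) F f) = pistar_integral TYPE('n) F f g"
proof -
  have "(\<integral>\<^sup>+x. g x \<partial>pistar TYPE('n::finite) F f) = (\<Sum>k\<in>UNIV. \<integral>\<^sup>+x. g x \<partial>pistar_part TYPE('n) F f k)"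
  proof (rule nn_integral_sum_measures)
    show "A \<in> sets (pistar TYPE('n) F f) \<Longrightarrow>
        emeasure (pistar TYPE('n) F f) A = (\<Sum>k\<in>UNIV. emeasure (pistar_part TYPE('n) F f k) A)" for A
      unfolding sets_pistar by (simp add: emeasure_pistar pistar_em_eq_sum_parts)
  qed (use g in \<open>simp_all add: sets_pistar sets_pistar_part cong: measurable_cong_sets\<close>)
  then show ?thesis using pistar_integral_eq_sum_parts[OF g] by simp
qed

lemma tri_weight_measurable:
  "(\<lambda>p::real \<times> real. ennreal (tri_density n f p) * indicator triangle p) \<in> borel_measurable borel"
  using borel_measurable_tri_density by measurable

lemma tri_integrand_measurable:
  assumes "g \<in> borel_measurable borel"
  shows "(\<lambda>p::real \<times> real. ennreal (tri_density n f p) * indicator triangle p * g p)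
    \<in> borel_measurable (lborel \<Otimes>\<^sub>M lborel)"
  using assms tri_weight_measurable unfolding lborel_prod by measurable

lemma tri_weight_section_measurable:
  "(\<lambda>b. ennreal (tri_density n f (a, b)) * indicator triangle (a, b)) \<in> borel_measurable borel"
  "(\<lambda>a. ennreal (tri_density n f (a, b)) * indicator triangle (a, b)) \<in> borel_measurable borel"
proof -
  have "(\<lambda>b::real. (a, b)) \<in> borel \<rightarrow>\<^sub>M (borel :: (real \<times> real) measure)"
    "(\<lambda>a::real. (a, b)) \<in> borel \<rightarrow>\<^sub>M (borel :: (real \<times> real) measure)"
    unfolding borel_prod[symmetric] by measurable
  from this[THEN measurable_compose, OF tri_weight_measurable] show
    "(\<lambda>b. ennreal (tri_density n f (a, b)) * indicator triangle (a, b)) \<in> borel_measurable borel"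
    "(\<lambda>a. ennreal (tri_density n f (a, b)) * indicator triangle (a, b)) \<in> borel_measurable borel"
    by simp_all
qed

end

lemma AE_pistar:
  assumes F: "marginal_ok F f" and P[measurable]: "Measurable.pred borel P"
    and emb: "\<And>i a b. 0 \<le> b \<Longrightarrow> b \<le> a \<Longrightarrow> a \<le> 1 \<Longrightarrow> P (emb i a b :: real^'n::finite)"
  shows "AE v in pistar TYPE('n) F f. P v"
proof -
  fix k :: 'n
  have "0 = emb k 0 0" "1 = emb k 1 1" by (simp_all add: vec_eq_iff emb_nth)
  then have "P 0" "P 1" using emb[of 0 0 k] emb[of 1 1 k] by simp_all
  moreover have tri: "ennreal (tri_density TYPE('n) f p) * indicator triangle p
      * indicator {v. \<not> P v} (emb i (fst p) (snd p)) = 0" for i p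
    using emb[of "snd p" "fst p" i] by (auto simp: triangle_def split: split_indicator)
  moreover have edge: "ennreal (edge_density TYPE('n) f b) * indicator {0<..<1} b
      * indicator {v. \<not> P v} (emb i 1 b) = 0" for i b
    using emb[of b 1 i] by (auto split: split_indicator)
  ultimately have "pistar_integral TYPE('n) F f (indicator {v. \<not> P v}) = 0"
    unfolding pistar_integral_def tri edge by simp
  moreover have "{v \<in> space borel. \<not> P v} \<in> sets borel" by measurable
  then have B: "{v. \<not> P v} \<in> sets borel" by simp
  ultimately have "emeasure (pistar TYPE('n) F f) {v. \<not> P v} = 0"
    by (simp add: emeasure_pistar[OF F B] pistar_em_eq_pistar_integral)
  then show ?thesis using B by (intro AE_I'[of "{v. \<not> P v}"]) (auto simp: sets_pistar)
qed

context
  fixes F :: "real measure" and f :: "real \<Rightarrow> real"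
  assumes N: "CARD('n::finite) \<ge> 2" and F: "marginal_ok F f" and R: "regI TYPE('n) F f"
begin

lemma nn_integral_hdens:
  assumes x: "0 < x" "x \<le> 1"
  shows "(\<integral>\<^sup>+b. ennreal (hdens TYPE('n) f b) * indicator {0<..<x} b \<partial>lborel)
    = ennreal (x powr (1 - expo TYPE('n)) * J TYPE('n) f x)"
proof -
  define Q where "Q = (\<integral>\<^sup>+b. ennreal (b powr - expo TYPE('n) / (real CARD('n) - 1) * J TYPE('n) f b)
    * indicator {0<..<x} b \<partial>lborel)"
  define P where "P = (\<integral>\<^sup>+s. ennreal s * ennreal (f s) * indicator {0<..<x} s \<partial>lborel)"
  note [measurable] = marginal_ok_measurable[OF F] borel_measurable_J[OF F] borel_measurable_hdens[OF F]
  have "P = (\<integral>\<^sup>+b. ennreal (hdens TYPE('n) f b) * indicator {0<..<x} b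
      + ennreal (b powr - expo TYPE('n) / (real CARD('n) - 1) * J TYPE('n) f b) * indicator {0<..<x} b \<partial>lborel)"
    unfolding P_def
  proof (intro nn_integral_cong)
    fix b :: real
    show "ennreal b * ennreal (f b) * indicator {0<..<x} b
      = ennreal (hdens TYPE('n) f b) * indicator {0<..<x} b
        + ennreal (b powr - expo TYPE('n) / (real CARD('n) - 1) * J TYPE('n) f b) * indicator {0<..<x} b"
    proof (cases "b \<in> {0<..<x}")
      case True
      then have b: "b \<in> {0<..<1}" using x by auto
      have "0 \<le> b powr - expo TYPE('n) / (real CARD('n) - 1) * J TYPE('n) f b"
        using J_nonneg[OF F, of b] b N by (intro mult_nonneg_nonneg divide_nonneg_nonneg) auto
      then show ?thesis
        using True hdens_nonneg[OF R b] b marginal_ok_nonneg[OF F b]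
        by (simp add: hdens_def ennreal_mult[symmetric] ennreal_plus[symmetric] del: ennreal_plus)
    qed simp
  qed
  then have "P = (\<integral>\<^sup>+b. ennreal (hdens TYPE('n) f b) * indicator {0<..<x} b \<partial>lborel) + Q"
    unfolding Q_def by (simp add: nn_integral_add)
  moreover have "P = Q + ennreal (x powr (1 - expo TYPE('n)) * J TYPE('n) f x)"
    unfolding P_def Q_def using nn_integral_J_layers[OF N F x] ..
  moreover have "P < \<infinity>"
    unfolding P_def using nn_integral_id_density_finite[OF F x(2)] .
  ultimately show ?thesis
    by (metis add.commute ennreal_add_left_cancel infinity_ennreal_def le_iff_add less_le_not_le)
qed

lemma edge_density_nonneg: "b \<in> {0<..<1} \<Longrightarrow> 0 \<le> edge_density TYPE('n) f b"
  unfolding edge_density_def using hdens_nonneg[OF R] N by simp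

lemma nn_integral_tri_section_fst:
  "(\<integral>\<^sup>+b. ennreal (tri_density TYPE('n) f (a, b)) * indicator triangle (a, b) \<partial>lborel)
    = ennreal (a powr (-1 - expo TYPE('n)) * J TYPE('n) f a / (real CARD('n) - 1)) * indicator {0<..<1} a"
proof (cases "a \<in> {0<..<1}")
  case True
  note [measurable] = borel_measurable_hdens[OF F]
  have "AE b in lborel. ennreal (tri_density TYPE('n) f (a, b)) * indicator triangle (a, b)
      = ennreal (1 / ((real CARD('n) - 1) * a\<^sup>2)) * (ennreal (hdens TYPE('n) f b) * indicator {0<..<a} b)"
    using AE_lborel_singleton[of a]
  proof eventually_elim
    case (elim b)
    show ?case
    proof (cases "b \<in> {0<..<a}")
      case b: True
      then have "0 \<le> hdens TYPE('n) f b" using True by (intro hdens_nonneg[OF R]) auto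
      then show ?thesis using b True N
        by (simp add: triangle_def tri_density_def ennreal_mult[symmetric] del: ennreal_mult)
    qed (use elim in \<open>auto simp: triangle_def\<close>)
  qed
  then have "(\<integral>\<^sup>+b. ennreal (tri_density TYPE('n) f (a, b)) * indicator triangle (a, b) \<partial>lborel)
      = ennreal (1 / ((real CARD('n) - 1) * a\<^sup>2))
        * (\<integral>\<^sup>+b. ennreal (hdens TYPE('n) f b) * indicator {0<..<a} b \<partial>lborel)"
    by (subst nn_integral_cmult[symmetric]) (simp_all add: nn_integral_cong_AE, measurable)
  also have "\<dots> = ennreal (1 / ((real CARD('n) - 1) * a\<^sup>2) * (a powr (1 - expo TYPE('n)) * J TYPE('n) f a))"
    using True card_minus_1_pos[OF N] J_nonneg[OF F, of a]
    by (subst ennreal_mult) (auto simp: nn_integral_hdens intro!: mult_nonneg_nonneg)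
  also have "1 / ((real CARD('n) - 1) * a\<^sup>2) * (a powr (1 - expo TYPE('n)) * J TYPE('n) f a)
      = a powr (-1 - expo TYPE('n)) * J TYPE('n) f a / (real CARD('n) - 1)"
  proof -
    have "a powr (1 - expo TYPE('n)) = a powr (-1 - expo TYPE('n)) * a\<^sup>2"
      using True by (simp add: powr_add[symmetric] flip: powr_numeral)
    then show ?thesis using True card_minus_1_pos[OF N] by (simp add: field_simps)
  qed
  finally show ?thesis using True by simp
qed (auto simp: triangle_def)

lemma nn_integral_tri_section_snd:
  "(\<integral>\<^sup>+a. ennreal (tri_density TYPE('n) f (a, b)) * indicator triangle (a, b) \<partial>lborel)
    = ennreal (edge_density TYPE('n) f b * (1 / b - 1)) * indicator {0<..<1} b"
proof (cases "b \<in> {0<..<1}")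
  case True
  have c: "0 \<le> edge_density TYPE('n) f b" using edge_density_nonneg[OF True] .
  have "ennreal (tri_density TYPE('n) f (a, b)) * indicator triangle (a, b)
      = ennreal (edge_density TYPE('n) f b) * (ennreal (a powr -2) * indicator {b..<1} a)" for a
  proof (cases "a \<in> {b..<1}")
    case a: True
    then have "0 < a" using True by auto
    then have "tri_density TYPE('n) f (a, b) = edge_density TYPE('n) f b * a powr -2"
      unfolding tri_density_def edge_density_def by (simp add: powr_minus divide_simps flip: powr_numeral)
    then show ?thesis using a True c \<open>0 < a\<close>
      by (simp add: triangle_def ennreal_mult[symmetric] del: ennreal_mult)
  qed (auto simp: triangle_def)
  then have "(\<integral>\<^sup>+a. ennreal (tri_density TYPE('n) f (a, b)) * indicator triangle (a, b) \<partial>lborel)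
      = ennreal (edge_density TYPE('n) f b) * (\<integral>\<^sup>+a. ennreal (a powr -2) * indicator {b..<1} a \<partial>lborel)"
    by (subst nn_integral_cmult[symmetric]) (simp_all, measurable)
  also have "(\<integral>\<^sup>+a. ennreal (a powr -2) * indicator {b..<1} a \<partial>lborel) = ennreal (1 / b - 1)"
    using True nn_integral_powr_interval(2)[of b 1 "-2"] by (simp add: powr_minus_divide)
  finally show ?thesis using True c by (simp add: ennreal_mult)
qed (auto simp: triangle_def)

lemma nn_integral_tri_fst:
  assumes u[measurable]: "u \<in> borel_measurable borel"
  shows "(\<integral>\<^sup>+p. ennreal (tri_density TYPE('n) f p) * indicator triangle p * u (fst p) \<partial>lborel)
    = (\<integral>\<^sup>+a. ennreal (a powr (-1 - expo TYPE('n)) * J TYPE('n) f a / (real CARD('n) - 1))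
        * indicator {0<..<1} a * u a \<partial>lborel)"
proof -
  have "(\<lambda>p::real \<times> real. u (fst p)) \<in> borel_measurable borel"
    unfolding borel_prod[symmetric] by measurable
  from lborel.nn_integral_fst[OF tri_integrand_measurable[OF F this, where n = "TYPE('n)"]]
  have "(\<integral>\<^sup>+p. ennreal (tri_density TYPE('n) f p) * indicator triangle p * u (fst p) \<partial>lborel)
      = (\<integral>\<^sup>+a. \<integral>\<^sup>+b. ennreal (tri_density TYPE('n) f (a, b)) * indicator triangle (a, b) * u a \<partial>lborel \<partial>lborel)"
    by (simp add: lborel_prod)
  also have "\<dots> = (\<integral>\<^sup>+a. (\<integral>\<^sup>+b. ennreal (tri_density TYPE('n) f (a, b)) * indicator triangle (a, b) \<partial>lborel)
      * u a \<partial>lborel)"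
    using tri_weight_section_measurable(1)[OF F] by (intro nn_integral_cong nn_integral_multc) simp
  finally show ?thesis by (simp add: nn_integral_tri_section_fst)
qed

lemma nn_integral_tri_snd:
  assumes u[measurable]: "u \<in> borel_measurable borel"
  shows "(\<integral>\<^sup>+p. ennreal (tri_density TYPE('n) f p) * indicator triangle p * u (snd p) \<partial>lborel)
    = (\<integral>\<^sup>+b. ennreal (edge_density TYPE('n) f b * (1 / b - 1)) * indicator {0<..<1} b * u b \<partial>lborel)"
proof -
  have "(\<lambda>p::real \<times> real. u (snd p)) \<in> borel_measurable borel"
    unfolding borel_prod[symmetric] by measurable
  from lborel_pair.nn_integral_snd[OF tri_integrand_measurable[OF F this, where n = "TYPE('n)"]]
  have "(\<integral>\<^sup>+p. ennreal (tri_density TYPE('n) f p) * indicator triangle p * u (snd p) \<partial>lborel)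
      = (\<integral>\<^sup>+b. \<integral>\<^sup>+a. ennreal (tri_density TYPE('n) f (a, b)) * indicator triangle (a, b) * u b \<partial>lborel \<partial>lborel)"
    by (simp add: lborel_prod)
  also have "\<dots> = (\<integral>\<^sup>+b. (\<integral>\<^sup>+a. ennreal (tri_density TYPE('n) f (a, b)) * indicator triangle (a, b) \<partial>lborel)
      * u b \<partial>lborel)"
    using tri_weight_section_measurable(2)[OF F] by (intro nn_integral_cong nn_integral_multc) simp
  finally show ?thesis by (simp add: nn_integral_tri_section_snd)
qed

lemma nn_integral_edge_density:
  "(\<integral>\<^sup>+b. ennreal (edge_density TYPE('n) f b) * indicator {0<..<1} b \<partial>lborel)
    = ennreal (J TYPE('n) f 1 / (real CARD('n) - 1))"
proof -
  note [measurable] = borel_measurable_hdens[OF F]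
  have "(\<integral>\<^sup>+b. ennreal (edge_density TYPE('n) f b) * indicator {0<..<1} b \<partial>lborel)
      = (\<integral>\<^sup>+b. ennreal (1 / (real CARD('n) - 1)) * (ennreal (hdens TYPE('n) f b) * indicator {0<..<1} b) \<partial>lborel)"
  proof (intro nn_integral_cong)
    fix b :: real
    show "ennreal (edge_density TYPE('n) f b) * indicator {0<..<1} b
      = ennreal (1 / (real CARD('n) - 1)) * (ennreal (hdens TYPE('n) f b) * indicator {0<..<1} b)"
    proof (cases "b \<in> {0<..<1}")
      case True
      then show ?thesis
        using hdens_nonneg[OF R True] N unfolding edge_density_def by (subst ennreal_mult) auto
    qed simp
  qed
  also have "\<dots> = ennreal (1 / (real CARD('n) - 1))
      * (\<integral>\<^sup>+b. ennreal (hdens TYPE('n) f b) * indicator {0<..<1} b \<partial>lborel)"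
    by (rule nn_integral_cmult) measurable
  also have "\<dots> = ennreal (J TYPE('n) f 1 / (real CARD('n) - 1))"
  proof -
    have "(\<integral>\<^sup>+b. ennreal (hdens TYPE('n) f b) * indicator {0<..<1} b \<partial>lborel) = ennreal (J TYPE('n) f 1)"
      using nn_integral_hdens[of 1] by simp
    moreover have "ennreal (J TYPE('n) f 1 / (real CARD('n) - 1))
        = ennreal (1 / (real CARD('n) - 1)) * ennreal (J TYPE('n) f 1)"
      using card_minus_1_pos[OF N] J_nonneg[OF F, of 1] by (subst ennreal_mult[symmetric]) auto
    ultimately show ?thesis by simp
  qed
  finally show ?thesis .
qed

text \<open>The density of each marginal of pistar on (0, 1): the winner's value contributes the first
  summand, the N - 1 losers' values on the triangle and on the edge a = 1 the other two.\<close>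
lemma marginal_density_decomposition:
  assumes a: "a \<in> {0<..<1}"
  shows "a powr (-1 - expo TYPE('n)) * J TYPE('n) f a / (real CARD('n) - 1)
    + (real CARD('n) - 1) * (edge_density TYPE('n) f a * (1 / a - 1))
    + (real CARD('n) - 1) * edge_density TYPE('n) f a = f a"
proof -
  define h where "h = hdens TYPE('n) f a"
  have n: "real CARD('n) - 1 \<noteq> 0" using N by simp
  have "(real CARD('n) - 1) * (edge_density TYPE('n) f a * (1 / a - 1))
      + (real CARD('n) - 1) * edge_density TYPE('n) f a = h / a"
  proof -
    have ce: "(real CARD('n) - 1) * edge_density TYPE('n) f a = h"
      using n unfolding edge_density_def h_def by simp
    have "(real CARD('n) - 1) * (edge_density TYPE('n) f a * (1 / a - 1))
        + (real CARD('n) - 1) * edge_density TYPE('n) f a = h * (1 / a - 1) + h"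
      by (simp only: mult.assoc[symmetric] ce)
    also have "\<dots> = h / a" using a by (simp add: field_simps)
    finally show ?thesis .
  qed
  also have "\<dots> = f a - a powr (-1 - expo TYPE('n)) * J TYPE('n) f a / (real CARD('n) - 1)"
  proof -
    have "a powr (- expo TYPE('n)) = a * a powr (-1 - expo TYPE('n))"
      using a by (simp add: powr_mult_base)
    then show ?thesis using a unfolding h_def hdens_def by (simp add: field_simps)
  qed
  finally show ?thesis by simp
qed

lemma sum_tri_coord:
  fixes k :: 'n
  assumes u[measurable]: "u \<in> borel_measurable borel"
  shows "(\<Sum>i\<in>UNIV. \<integral>\<^sup>+p. ennreal (tri_density TYPE('n) f p) * indicator triangle p
      * u (emb i (fst p) (snd p) $ k) \<partial>lborel)
    = (\<integral>\<^sup>+a. ennreal (a powr (-1 - expo TYPE('n)) * J TYPE('n) f a / (real CARD('n) - 1))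
        * indicator {0<..<1} a * u a \<partial>lborel)
      + ennreal (real CARD('n) - 1)
        * (\<integral>\<^sup>+b. ennreal (edge_density TYPE('n) f b * (1 / b - 1)) * indicator {0<..<1} b * u b \<partial>lborel)"
proof -
  have "(\<integral>\<^sup>+p. ennreal (tri_density TYPE('n) f p) * indicator triangle p * u (emb i (fst p) (snd p) $ k) \<partial>lborel)
    = (if i = k then \<integral>\<^sup>+p. ennreal (tri_density TYPE('n) f p) * indicator triangle p * u (fst p) \<partial>lborel
       else \<integral>\<^sup>+p. ennreal (tri_density TYPE('n) f p) * indicator triangle p * u (snd p) \<partial>lborel)" for i
    by (simp add: emb_nth)
  then have "(\<Sum>i\<in>UNIV. \<integral>\<^sup>+p. ennreal (tri_density TYPE('n) f p) * indicator triangle p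
      * u (emb i (fst p) (snd p) $ k) \<partial>lborel)
    = (\<Sum>i\<in>UNIV. if i = k then \<integral>\<^sup>+p. ennreal (tri_density TYPE('n) f p) * indicator triangle p * u (fst p) \<partial>lborel
       else \<integral>\<^sup>+p. ennreal (tri_density TYPE('n) f p) * indicator triangle p * u (snd p) \<partial>lborel)"
    by simp
  then show ?thesis
    unfolding sum_UNIV_if_eq of_nat_card_minus_1 nn_integral_tri_fst[OF u] nn_integral_tri_snd[OF u] .
qed

lemma sum_edge_coord:
  fixes k :: 'n
  assumes u[measurable]: "u \<in> borel_measurable borel"
  shows "(\<Sum>i\<in>UNIV. \<integral>\<^sup>+b. ennreal (edge_density TYPE('n) f b) * indicator {0<..<1} b * u (emb i 1 b $ k) \<partial>lborel)
    = ennreal (J TYPE('n) f 1 / (real CARD('n) - 1)) * u 1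
      + ennreal (real CARD('n) - 1) * (\<integral>\<^sup>+b. ennreal (edge_density TYPE('n) f b) * indicator {0<..<1} b * u b \<partial>lborel)"
proof -
  note [measurable] = borel_measurable_edge_density[OF F]
  have "(\<integral>\<^sup>+b. ennreal (edge_density TYPE('n) f b) * indicator {0<..<1} b * u (emb i 1 b $ k) \<partial>lborel)
    = (if i = k then ennreal (J TYPE('n) f 1 / (real CARD('n) - 1)) * u 1
       else \<integral>\<^sup>+b. ennreal (edge_density TYPE('n) f b) * indicator {0<..<1} b * u b \<partial>lborel)" for i
    by (simp add: emb_nth nn_integral_multc nn_integral_edge_density)
  then have "(\<Sum>i\<in>UNIV. \<integral>\<^sup>+b. ennreal (edge_density TYPE('n) f b) * indicator {0<..<1} b * u (emb i 1 b $ k) \<partial>lborel)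
    = (\<Sum>i\<in>UNIV. if i = k then ennreal (J TYPE('n) f 1 / (real CARD('n) - 1)) * u 1
       else \<integral>\<^sup>+b. ennreal (edge_density TYPE('n) f b) * indicator {0<..<1} b * u b \<partial>lborel)"
    by simp
  then show ?thesis unfolding sum_UNIV_if_eq of_nat_card_minus_1 .
qed

lemma nn_integral_marginal_density_split:
  assumes u[measurable]: "u \<in> borel_measurable borel"
  shows "(\<integral>\<^sup>+a. ennreal (a powr (-1 - expo TYPE('n)) * J TYPE('n) f a / (real CARD('n) - 1))
        * indicator {0<..<1} a * u a \<partial>lborel)
      + ennreal (real CARD('n) - 1)
        * (\<integral>\<^sup>+b. ennreal (edge_density TYPE('n) f b * (1 / b - 1)) * indicator {0<..<1} b * u b \<partial>lborel)
      + ennreal (real CARD('n) - 1) * (\<integral>\<^sup>+b. ennreal (edge_density TYPE('n) f b) * indicator {0<..<1} b * u b \<partial>lborel)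
    = (\<integral>\<^sup>+x. ennreal (f x) * indicator {0<..<1} x * u x \<partial>lborel)"
proof -
  note [measurable] = borel_measurable_edge_density[OF F] borel_measurable_J[OF F]
  define c where "c = ennreal (real CARD('n) - 1)"
  have "ennreal (a powr (-1 - expo TYPE('n)) * J TYPE('n) f a / (real CARD('n) - 1))
      + c * ennreal (edge_density TYPE('n) f a * (1 / a - 1)) + c * ennreal (edge_density TYPE('n) f a)
      = ennreal (f a)" if a: "a \<in> {0<..<1}" for a
  proof -
    have "0 \<le> a powr (-1 - expo TYPE('n)) * J TYPE('n) f a / (real CARD('n) - 1)"
      using a J_nonneg[OF F, of a] card_minus_1_pos[OF N] by (intro divide_nonneg_nonneg mult_nonneg_nonneg) auto
    moreover have "0 \<le> edge_density TYPE('n) f a * (1 / a - 1)" using a edge_density_nonneg[OF a] by simp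
    ultimately show ?thesis
      using a edge_density_nonneg[OF a] card_minus_1_pos[OF N]
      unfolding c_def marginal_density_decomposition[OF a, symmetric] by (simp add: ennreal_plus ennreal_mult)
  qed
  then have "(\<integral>\<^sup>+a. (ennreal (a powr (-1 - expo TYPE('n)) * J TYPE('n) f a / (real CARD('n) - 1))
      + c * ennreal (edge_density TYPE('n) f a * (1 / a - 1)) + c * ennreal (edge_density TYPE('n) f a))
      * indicator {0<..<1} a * u a \<partial>lborel) = (\<integral>\<^sup>+x. ennreal (f x) * indicator {0<..<1} x * u x \<partial>lborel)"
    by (intro nn_integral_cong) (simp split: split_indicator)
  then show ?thesis unfolding c_def[symmetric]
    by (simp add: nn_integral_add nn_integral_cmult distrib_right mult.assoc)
qed

lemma nn_integral_pistar_coord: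
  assumes u[measurable]: "u \<in> borel_measurable borel"
  shows "(\<integral>\<^sup>+v. u (v $ k) \<partial>pistar TYPE('n) F f) = (\<integral>\<^sup>+x. u x \<partial>F)"
proof -
  have corner: "ennreal (J TYPE('n) f 1 / (real CARD('n) - 1)) + ennreal (corner_mass TYPE('n) F f)
      = ennreal (measure F {1})"
  proof -
    have "0 \<le> J TYPE('n) f 1 / (real CARD('n) - 1)"
      using J_nonneg[OF F, of 1] card_minus_1_pos[OF N] by (intro divide_nonneg_nonneg) auto
    then show ?thesis
      using corner_mass_nonneg[OF R] by (subst ennreal_plus[symmetric]) (auto simp: corner_mass_def)
  qed
  have "(\<integral>\<^sup>+v. u (v $ k) \<partial>pistar TYPE('n) F f) = pistar_integral TYPE('n) F f (\<lambda>v. u (v $ k))"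
    by (rule nn_integral_pistar[OF F]) measurable
  also have "\<dots> = ennreal (measure F {0}) * u 0 + (\<integral>\<^sup>+x. ennreal (f x) * indicator {0<..<1} x * u x \<partial>lborel)
      + (ennreal (J TYPE('n) f 1 / (real CARD('n) - 1)) + ennreal (corner_mass TYPE('n) F f)) * u 1"
    unfolding pistar_integral_def sum_tri_coord[OF u] sum_edge_coord[OF u]
      nn_integral_marginal_density_split[OF u, symmetric]
    by (simp add: algebra_simps)
  also have "\<dots> = (\<integral>\<^sup>+x. u x \<partial>F)"
    unfolding corner by (simp add: nn_integral_marginal[OF F u])
  finally show ?thesis .
qed

lemma pistar_in_PiF: "pistar TYPE('n) F f \<in> PiF F"
proof -
  have sets: "sets F = sets borel" by (rule marginal_ok_sets[OF F])
  have marginal: "distr (pistar TYPE('n) F f) borel (\<lambda>v. v $ k) = F" for k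
  proof (rule measure_eqI)
    fix A assume "A \<in> sets (distr (pistar TYPE('n) F f) borel (\<lambda>v. v $ k))"
    then have A[measurable]: "A \<in> sets borel" by simp
    have "{v \<in> space borel. (v::real^'n) $ k \<in> A} \<in> sets borel" by measurable
    then have Ak: "{v::real^'n. v $ k \<in> A} \<in> sets (pistar TYPE('n) F f)" by (simp add: sets_pistar)
    have "emeasure (distr (pistar TYPE('n) F f) borel (\<lambda>v. v $ k)) A
        = emeasure (pistar TYPE('n) F f) {v. v $ k \<in> A}"
      by (subst emeasure_distr) (auto simp: sets_pistar space_pistar vimage_def cong: measurable_cong_sets)
    also have "\<dots> = (\<integral>\<^sup>+v. indicator {v. v $ k \<in> A} v \<partial>pistar TYPE('n) F f)"
      using Ak by (rule nn_integral_indicator[symmetric])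
    also have "\<dots> = (\<integral>\<^sup>+v. indicator A (v $ k) \<partial>pistar TYPE('n) F f)"
      by (intro nn_integral_cong) (simp split: split_indicator)
    also have "\<dots> = emeasure F A"
      using A sets by (simp add: nn_integral_pistar_coord)
    finally show "emeasure (distr (pistar TYPE('n) F f) borel (\<lambda>v. v $ k)) A = emeasure F A" .
  qed (use sets in simp)
  have "prob_space (pistar TYPE('n) F f)"
  proof (rule prob_spaceI)
    interpret prob_space F by (rule marginal_ok_prob_space[OF F])
    fix k :: 'n
    have "emeasure (pistar TYPE('n) F f) (space (pistar TYPE('n) F f))
        = (\<integral>\<^sup>+v. (\<lambda>_. 1) (v $ k) \<partial>pistar TYPE('n) F f)"
      by simp
    also have "\<dots> = 1" by (subst nn_integral_pistar_coord) (simp_all add: emeasure_space_1)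
    finally show "emeasure (pistar TYPE('n) F f) (space (pistar TYPE('n) F f)) = 1" .
  qed
  then show ?thesis unfolding PiF_def using marginal by (auto simp: sets_pistar)
qed

end

section \<open>Revenue of the auction against correlated values\<close>

context
  fixes F :: "real measure" and f :: "real \<Rightarrow> real"
  assumes N: "CARD('n::finite) \<ge> 2" and F: "marginal_ok F f"
begin

lemma integrable_sum_tstar:
  assumes \<pi>: "\<pi> \<in> PiF F"
  shows "integrable \<pi> (\<lambda>v::real^'n. \<Sum>j\<in>UNIV. tstar v $ j)"
proof -
  interpret prob_space \<pi> by (rule PiF_prob_space[OF \<pi>])
  show ?thesis
  proof (rule integrable_const_bound[where B = 1])
    show "AE v in \<pi>. norm (\<Sum>j\<in>UNIV. tstar v $ j) \<le> 1"
      using PiF_AE_cube[OF F \<pi>] proof eventually_elim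
      case (elim v)
      have "0 \<le> (\<Sum>j\<in>UNIV. v $ j powr expo TYPE('n)) / real CARD('n)" by (simp add: sum_nonneg)
      then show ?case using sum_tstar_ge[OF N elim] sum_tstar_le_1[OF N elim] by simp
    qed
  qed (use borel_measurable_sum_tstar[OF N] PiF_sets[OF \<pi>] in \<open>simp cong: measurable_cong_sets\<close>)
qed

lemma U_tstar_ge:
  assumes \<pi>: "\<pi> \<in> PiF F"
  shows "(\<integral>x. x powr expo TYPE('n) \<partial>F) \<le> U (tstar :: real^'n \<Rightarrow> real^'n) \<pi>"
  unfolding U_def integral_mean_powr_PiF(2)[OF F \<pi>, symmetric]
  using integral_mean_powr_PiF(1)[OF F \<pi>] integrable_sum_tstar[OF \<pi>]
proof (rule integral_mono_AE)
  show "AE v in \<pi>. (\<Sum>j\<in>UNIV. v $ j powr expo TYPE('n)) / real CARD('n) \<le> (\<Sum>j\<in>UNIV. tstar v $ j)"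
    using PiF_AE_cube[OF F \<pi>] by eventually_elim (rule sum_tstar_ge[OF N])
qed

end

context
  fixes F :: "real measure" and f :: "real \<Rightarrow> real"
  assumes N: "CARD('n::finite) \<ge> 2" and F: "marginal_ok F f" and R: "regI TYPE('n) F f"
begin

lemma U_tstar_pistar:
  "U (tstar :: real^'n \<Rightarrow> real^'n) (pistar TYPE('n) F f) = (\<integral>x. x powr expo TYPE('n) \<partial>F)"
proof -
  note [measurable] = borel_measurable_sum_tstar[OF N]
  have "AE v in pistar TYPE('n) F f.
      (\<Sum>j\<in>UNIV. tstar v $ j) = (\<Sum>j\<in>UNIV. v $ j powr expo TYPE('n)) / real CARD('n)"
  proof (rule AE_pistar[OF F])
    show "(\<Sum>j\<in>UNIV. tstar (emb i a b :: real^'n) $ j)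
        = (\<Sum>j\<in>UNIV. emb i a b $ j powr expo TYPE('n)) / real CARD('n)" if "0 \<le> b" "b \<le> a" for i a b
      using that by (rule sum_tstar_emb[OF N])
  qed measurable
  then have "U tstar (pistar TYPE('n) F f)
      = (\<integral>v. (\<Sum>j\<in>UNIV. v $ j powr expo TYPE('n)) / real CARD('n) \<partial>pistar TYPE('n) F f)"
    unfolding U_def using borel_measurable_sum_tstar[OF N]
    by (intro integral_cong_AE) (simp_all add: sets_pistar cong: measurable_cong_sets)
  also have "\<dots> = (\<integral>x. x powr expo TYPE('n) \<partial>F)"
    by (rule integral_mean_powr_PiF(2)[OF F pistar_in_PiF[OF N F R]])
  finally show ?thesis .
qed

lemma INF_U_tstar:
  "(INF \<pi>\<in>PiF F. U (tstar :: real^'n \<Rightarrow> real^'n) \<pi>) = (\<integral>x. x powr expo TYPE('n) \<partial>F)"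
proof (rule cInf_eq_minimum)
  show "(\<integral>x. x powr expo TYPE('n) \<partial>F) \<in> (\<lambda>\<pi>. U (tstar :: real^'n \<Rightarrow> real^'n) \<pi>) ` PiF F"
    using pistar_in_PiF[OF N F R] U_tstar_pistar by (metis image_eqI)
qed (use U_tstar_ge[OF N F] in auto)

section \<open>Optimality of the auction against the adversarial structure\<close>

lemma fiber_tri_revenue_bound:
  fixes q t :: "real^'n \<Rightarrow> real^'n" and i :: 'n
  assumes adm: "admissible q t" and b: "b \<in> {0<..<1}"
  shows "ennreal (edge_density TYPE('n) f b
      * ((1 / b - 1) - (LINT a:{b<..1}|lborel. t (emb i a b) $ i * a powr -2)))
    \<le> (\<integral>\<^sup>+a. ennreal (tri_density TYPE('n) f (a, b)) * indicator triangle (a, b)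
        * ennreal (1 - (\<Sum>j\<in>UNIV. t (emb i a b) $ j)) \<partial>lborel)"
proof -
  define c where "c = edge_density TYPE('n) f b"
  define T where "T a = t (emb i a b) $ i" for a
  define H where "H a = c * (a powr -2 - T a * a powr -2)" for a
  have c: "0 \<le> c" unfolding c_def using b by (rule edge_density_nonneg[OF N F R])
  have H_eq: "H a = c * a powr -2 * (1 - T a)" for a unfolding H_def by (simp add: algebra_simps)
  have H_int: "set_integrable lborel {b<..1} H"
    using inv_sq_integral(1)[of b 1] admissible_segment_bound(1)[OF adm, of b i] b
    unfolding H_def T_def by (intro set_integrable_mult_right set_integral_diff(1)) auto
  have H_le: "ennreal (indicator {b<..1} a * H a) \<le> ennreal (tri_density TYPE('n) f (a, b))
      * indicator triangle (a, b) * ennreal (1 - (\<Sum>j\<in>UNIV. t (emb i a b) $ j))" if "a \<noteq> 1" for a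
  proof (cases "a \<in> {b<..1}")
    case True
    then have a: "b < a" "a < 1" using that by auto
    have "tri_density TYPE('n) f (a, b) = c * a powr -2"
      unfolding tri_density_def c_def edge_density_def using a b
      by (simp add: powr_minus_divide field_simps flip: powr_numeral)
    moreover have "H a \<le> c * a powr -2 * (1 - (\<Sum>j\<in>UNIV. t (emb i a b) $ j))"
      using admissible_revenue_emb_le[OF adm, of b a i] a b c unfolding H_eq T_def
      by (intro mult_left_mono) auto
    moreover have "0 \<le> 1 - T a"
      using admissible_payment_le_1[OF adm emb_cube, of a b i] a b unfolding T_def by simp
    ultimately have "ennreal (H a) \<le> ennreal (tri_density TYPE('n) f (a, b))
        * ennreal (1 - (\<Sum>j\<in>UNIV. t (emb i a b) $ j))"
      using c by (simp add: ennreal_mult'[symmetric] ennreal_leI)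
    then show ?thesis using a b by (simp add: triangle_def)
  qed simp
  have "c * ((1 / b - 1) - (LINT a:{b<..1}|lborel. T a * a powr -2)) = (LINT a:{b<..1}|lborel. H a)"
    using inv_sq_integral[of b 1] admissible_segment_bound(1)[OF adm, of b i] b
    unfolding H_def T_def by (simp add: set_integral_mult_right set_integral_diff(2))
  also have "ennreal \<dots> = (\<integral>\<^sup>+a. ennreal (indicator {b<..1} a * H a) \<partial>lborel)"
    using H_int admissible_payment_le_1[OF adm emb_cube, of _ b i] b c
    unfolding set_lebesgue_integral_def set_integrable_def real_scaleR_def H_eq T_def
    by (intro nn_integral_eq_integral[symmetric] AE_I2) (auto split: split_indicator)
  also have "\<dots> \<le> (\<integral>\<^sup>+a. ennreal (tri_density TYPE('n) f (a, b)) * indicator triangle (a, b)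
      * ennreal (1 - (\<Sum>j\<in>UNIV. t (emb i a b) $ j)) \<partial>lborel)"
    using AE_lborel_singleton[of 1] H_le by (intro nn_integral_mono_AE) auto
  finally show ?thesis unfolding c_def T_def .
qed

lemma fiber_revenue_bound:
  fixes q t :: "real^'n \<Rightarrow> real^'n" and i :: 'n
  assumes adm: "admissible q t" and b: "b \<in> {0<..<1}"
  defines "g \<equiv> \<lambda>v. \<Sum>j\<in>UNIV. t v $ j"
  shows "ennreal (edge_density TYPE('n) f b * (1 / b - 1))
    \<le> (\<integral>\<^sup>+a. ennreal (tri_density TYPE('n) f (a, b)) * indicator triangle (a, b) * ennreal (1 - g (emb i a b)) \<partial>lborel)
      + ennreal (edge_density TYPE('n) f b) * ennreal (1 - g (emb i 1 b))"
proof -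
  define c where "c = edge_density TYPE('n) f b"
  define T where "T a = t (emb i a b) $ i" for a
  define L where "L = (LINT a:{b<..1}|lborel. T a * a powr -2)"
  have c: "0 \<le> c" unfolding c_def using b by (rule edge_density_nonneg[OF N F R])
  have T1: "T a \<le> 1" if "a \<in> {0..1}" for a
    using admissible_payment_le_1[OF adm emb_cube[OF that], of b i] b unfolding T_def by simp
  have seg: "set_integrable lborel {b<..1} (\<lambda>a. T a * a powr -2)" "L + T 1 \<le> 1"
    using admissible_segment_bound[OF adm, of b i] b unfolding T_def L_def by auto
  have inv_sq: "set_integrable lborel {b<..1} (\<lambda>a. a powr -2)" "(LINT a:{b<..1}|lborel. a powr -2) = 1 / b - 1"
    using inv_sq_integral[of b 1] b by simp_all
  have L: "L \<le> 1 / b - 1"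
    unfolding L_def inv_sq(2)[symmetric] using seg(1) inv_sq(1) T1 b
    by (intro set_integral_mono) (auto intro!: mult_left_le_one_le)
  have "c * (L + T 1) \<le> c * 1" using seg(2) c by (intro mult_left_mono) auto
  then have "ennreal (c * (1 / b - 1)) \<le> ennreal (c * ((1 / b - 1) - L) + c * (1 - T 1))"
    by (intro ennreal_leI) (simp add: algebra_simps)
  also have "\<dots> = ennreal (c * ((1 / b - 1) - L)) + ennreal (c * (1 - T 1))"
    using L T1[of 1] c by (intro ennreal_plus mult_nonneg_nonneg) auto
  also have "\<dots> \<le> (\<integral>\<^sup>+a. ennreal (tri_density TYPE('n) f (a, b))
      * indicator triangle (a, b) * ennreal (1 - g (emb i a b)) \<partial>lborel) + ennreal c * ennreal (1 - g (emb i 1 b))"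
  proof (rule add_mono)
    show "ennreal (c * ((1 / b - 1) - L)) \<le> (\<integral>\<^sup>+a. ennreal (tri_density TYPE('n) f (a, b))
      * indicator triangle (a, b) * ennreal (1 - g (emb i a b)) \<partial>lborel)"
      using fiber_tri_revenue_bound[OF adm b, of i] unfolding c_def L_def T_def g_def .
    show "ennreal (c * (1 - T 1)) \<le> ennreal c * ennreal (1 - g (emb i 1 b))"
      using admissible_revenue_emb_le[OF adm, of b 1 i] b c unfolding ennreal_mult'[OF c, symmetric] g_def T_def
      by (intro ennreal_leI mult_left_mono) auto
  qed
  finally show ?thesis unfolding c_def .
qed

lemma bidder_revenue_bound:
  fixes q t :: "real^'n \<Rightarrow> real^'n" and i :: 'n
  assumes adm: "admissible q t" and g: "(\<lambda>v. \<Sum>j\<in>UNIV. t v $ j) \<in> borel_measurable borel"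
  defines "\<phi> \<equiv> \<lambda>v. ennreal (1 - (\<Sum>j\<in>UNIV. t v $ j))"
  shows "(\<integral>\<^sup>+b. ennreal (edge_density TYPE('n) f b * (1 / b - 1)) * indicator {0<..<1} b \<partial>lborel)
    \<le> (\<integral>\<^sup>+p. ennreal (tri_density TYPE('n) f p) * indicator triangle p * \<phi> (emb i (fst p) (snd p)) \<partial>lborel)
      + (\<integral>\<^sup>+b. ennreal (edge_density TYPE('n) f b) * indicator {0<..<1} b * \<phi> (emb i 1 b) \<partial>lborel)"
proof -
  note [measurable] = g borel_measurable_edge_density[OF F]
  have [measurable]: "\<phi> \<in> borel_measurable borel" unfolding \<phi>_def by measurable
  define H where "H p = ennreal (tri_density TYPE('n) f p) * indicator triangle p * \<phi> (emb i (fst p) (snd p))" for p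
  have Hm: "H \<in> borel_measurable (lborel \<Otimes>\<^sub>M lborel)"
    unfolding H_def
    by (rule tri_integrand_measurable[OF F], rule measurable_compose[OF borel_measurable_emb_pair]) simp
  have "(\<integral>\<^sup>+b. ennreal (edge_density TYPE('n) f b * (1 / b - 1)) * indicator {0<..<1} b \<partial>lborel)
      \<le> (\<integral>\<^sup>+b. (\<integral>\<^sup>+a. H (a, b) \<partial>lborel)
        + ennreal (edge_density TYPE('n) f b) * indicator {0<..<1} b * \<phi> (emb i 1 b) \<partial>lborel)"
  proof (intro nn_integral_mono)
    fix b :: real
    show "ennreal (edge_density TYPE('n) f b * (1 / b - 1)) * indicator {0<..<1} b
      \<le> (\<integral>\<^sup>+a. H (a, b) \<partial>lborel) + ennreal (edge_density TYPE('n) f b) * indicator {0<..<1} b * \<phi> (emb i 1 b)"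
      using fiber_revenue_bound[OF adm, of b i] unfolding H_def \<phi>_def
      by (cases "b \<in> {0<..<1}") auto
  qed
  also have "\<dots> = (\<integral>\<^sup>+b. \<integral>\<^sup>+a. H (a, b) \<partial>lborel \<partial>lborel)
      + (\<integral>\<^sup>+b. ennreal (edge_density TYPE('n) f b) * indicator {0<..<1} b * \<phi> (emb i 1 b) \<partial>lborel)"
    using lborel.borel_measurable_nn_integral_fst[OF measurable_pair_swap[OF Hm]]
    by (intro nn_integral_add) auto
  also have "(\<integral>\<^sup>+b. \<integral>\<^sup>+a. H (a, b) \<partial>lborel \<partial>lborel) = (\<integral>\<^sup>+p. H p \<partial>lborel)"
    using lborel_pair.nn_integral_snd[OF Hm] by (simp add: lborel_prod)
  finally show ?thesis unfolding H_def .
qed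

lemma pistar_total_mass:
  "ennreal (measure F {0})
    + ennreal (real CARD('n)) * (\<integral>\<^sup>+b. ennreal (edge_density TYPE('n) f b * (1 / b - 1)) * indicator {0<..<1} b \<partial>lborel)
    + ennreal (\<integral>x. x powr expo TYPE('n) \<partial>F) = 1"
proof -
  define Y where "Y = (\<integral>\<^sup>+b. ennreal (edge_density TYPE('n) f b * (1 / b - 1)) * indicator {0<..<1} b \<partial>lborel)"
  interpret prob_space "pistar TYPE('n) F f"
    using pistar_in_PiF[OF N F R] by (rule PiF_prob_space)
  have J: "0 \<le> J TYPE('n) f 1 / (real CARD('n) - 1)"
    using J_nonneg[OF F, of 1] card_minus_1_pos[OF N] by (intro divide_nonneg_nonneg) auto
  have "1 = (\<integral>\<^sup>+v. 1 \<partial>pistar TYPE('n) F f)" using emeasure_space_1 by simp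
  also have "\<dots> = pistar_integral TYPE('n) F f (\<lambda>_. 1)" by (rule nn_integral_pistar[OF F]) simp
  also have "\<dots> = ennreal (measure F {0}) + ennreal (real CARD('n)) * Y
      + (ennreal (real CARD('n)) * ennreal (J TYPE('n) f 1 / (real CARD('n) - 1)) + ennreal (corner_mass TYPE('n) F f))"
    using nn_integral_tri_snd[OF N F R, of "\<lambda>_. 1"] nn_integral_edge_density[OF N F R]
    unfolding pistar_integral_def Y_def by (simp add: ennreal_of_nat_eq_real_of_nat add.assoc)
  also have "ennreal (real CARD('n)) * ennreal (J TYPE('n) f 1 / (real CARD('n) - 1)) + ennreal (corner_mass TYPE('n) F f)
      = ennreal (\<integral>x. x powr expo TYPE('n) \<partial>F)"
  proof -
    define m where "m = real CARD('n) - 1"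
    have "0 < m" "real CARD('n) = m + 1" using card_minus_1_pos[OF N] unfolding m_def by simp_all
    then have "real CARD('n) * (J TYPE('n) f 1 / (real CARD('n) - 1)) + corner_mass TYPE('n) F f
        = J TYPE('n) f 1 + measure F {1}"
      unfolding corner_mass_def m_def[symmetric] by (simp add: field_simps)
    moreover have "ennreal (real CARD('n)) * ennreal (J TYPE('n) f 1 / (real CARD('n) - 1))
        = ennreal (real CARD('n) * (J TYPE('n) f 1 / (real CARD('n) - 1)))"
      using J by (intro ennreal_mult[symmetric]) auto
    moreover have "ennreal (real CARD('n) * (J TYPE('n) f 1 / (real CARD('n) - 1))) + ennreal (corner_mass TYPE('n) F f)
        = ennreal (real CARD('n) * (J TYPE('n) f 1 / (real CARD('n) - 1)) + corner_mass TYPE('n) F f)"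
      using J corner_mass_nonneg[OF R] by (intro ennreal_plus[symmetric] mult_nonneg_nonneg) auto
    ultimately show ?thesis by (simp add: integral_powr_expo[OF F])
  qed
  finally show ?thesis unfolding Y_def by (simp add: add.assoc)
qed

text \<open>The left-hand side is the mass of pistar on the profiles whose highest value is below 1.\<close>
lemma pistar_mass_vmax_lt_1:
  "ennreal (measure F {0})
    + ennreal (real CARD('n)) * (\<integral>\<^sup>+b. ennreal (edge_density TYPE('n) f b * (1 / b - 1)) * indicator {0<..<1} b \<partial>lborel)
    = ennreal (1 - (\<integral>x. x powr expo TYPE('n) \<partial>F))"
proof -
  have "0 \<le> (\<integral>x. x powr expo TYPE('n) \<partial>F)" by simp
  moreover have "ennreal (measure F {0})
    + ennreal (real CARD('n)) * (\<integral>\<^sup>+b. ennreal (edge_density TYPE('n) f b * (1 / b - 1)) * indicator {0<..<1} b \<partial>lborel)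
    = 1 - ennreal (\<integral>x. x powr expo TYPE('n) \<partial>F)"
    using pistar_total_mass by (metis ennreal_add_diff_cancel_right ennreal_neq_top)
  ultimately show ?thesis by (simp add: ennreal_minus[symmetric])
qed

lemma nn_integral_pistar_revenue_shortfall:
  fixes q t :: "real^'n \<Rightarrow> real^'n"
  assumes adm: "admissible q t" and g[measurable]: "(\<lambda>v. \<Sum>j\<in>UNIV. t v $ j) \<in> borel_measurable borel"
  shows "ennreal (measure F {0})
      + ennreal (real CARD('n)) * (\<integral>\<^sup>+b. ennreal (edge_density TYPE('n) f b * (1 / b - 1)) * indicator {0<..<1} b \<partial>lborel)
    \<le> (\<integral>\<^sup>+v. ennreal (1 - (\<Sum>j\<in>UNIV. t v $ j)) \<partial>pistar TYPE('n) F f)"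
proof -
  define \<phi> where "\<phi> v = ennreal (1 - (\<Sum>j\<in>UNIV. t v $ j))" for v
  define Y where "Y = (\<integral>\<^sup>+b. ennreal (edge_density TYPE('n) f b * (1 / b - 1)) * indicator {0<..<1} b \<partial>lborel)"
  have "ennreal 1 \<le> \<phi> 0"
    using admissible_revenue_zero[OF adm] unfolding \<phi>_def by (intro ennreal_leI) simp
  then have zero: "ennreal (measure F {0}) \<le> ennreal (measure F {0}) * \<phi> 0"
    using mult_left_mono[of "ennreal 1" "\<phi> 0" "ennreal (measure F {0})"] by simp
  have losers: "ennreal (real CARD('n)) * Y \<le> (\<Sum>i\<in>UNIV.
      (\<integral>\<^sup>+p. ennreal (tri_density TYPE('n) f p) * indicator triangle p * \<phi> (emb i (fst p) (snd p)) \<partial>lborel)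
      + (\<integral>\<^sup>+b. ennreal (edge_density TYPE('n) f b) * indicator {0<..<1} b * \<phi> (emb i 1 b) \<partial>lborel))"
  proof -
    have "ennreal (real CARD('n)) * Y = (\<Sum>i\<in>(UNIV::'n set). Y)"
      by (simp add: ennreal_of_nat_eq_real_of_nat)
    also have "\<dots> \<le> (\<Sum>i\<in>UNIV.
      (\<integral>\<^sup>+p. ennreal (tri_density TYPE('n) f p) * indicator triangle p * \<phi> (emb i (fst p) (snd p)) \<partial>lborel)
      + (\<integral>\<^sup>+b. ennreal (edge_density TYPE('n) f b) * indicator {0<..<1} b * \<phi> (emb i 1 b) \<partial>lborel))"
      using bidder_revenue_bound[OF adm g] unfolding Y_def \<phi>_def by (intro sum_mono) simp
    finally show ?thesis .
  qed
  have eq: "pistar_integral TYPE('n) F f \<phi> = ennreal (corner_mass TYPE('n) F f) * \<phi> 1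
      + (ennreal (measure F {0}) * \<phi> 0 + (\<Sum>i\<in>UNIV.
      (\<integral>\<^sup>+p. ennreal (tri_density TYPE('n) f p) * indicator triangle p * \<phi> (emb i (fst p) (snd p)) \<partial>lborel)
      + (\<integral>\<^sup>+b. ennreal (edge_density TYPE('n) f b) * indicator {0<..<1} b * \<phi> (emb i 1 b) \<partial>lborel)))"
    unfolding pistar_integral_def sum.distrib by (simp add: add_ac)
  have "ennreal (measure F {0}) + ennreal (real CARD('n)) * Y \<le> pistar_integral TYPE('n) F f \<phi>"
    unfolding eq by (rule add_increasing[OF zero_le add_mono[OF zero losers]])
  also have "\<dots> = (\<integral>\<^sup>+v. \<phi> v \<partial>pistar TYPE('n) F f)"
    unfolding \<phi>_def by (rule nn_integral_pistar[OF F, symmetric]) measurable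
  finally show ?thesis unfolding Y_def \<phi>_def .
qed

lemma U_pistar_le:
  fixes q t :: "real^'n \<Rightarrow> real^'n"
  assumes adm: "admissible q t"
  shows "U t (pistar TYPE('n) F f) \<le> (\<integral>x. x powr expo TYPE('n) \<partial>F)"
proof (cases "integrable (pistar TYPE('n) F f) (\<lambda>v. \<Sum>j\<in>UNIV. t v $ j)")
  case False
  then have "U t (pistar TYPE('n) F f) = 0" unfolding U_def by (rule not_integrable_integral_eq)
  then show ?thesis by simp
next
  case True
  interpret prob_space "pistar TYPE('n) F f"
    using pistar_in_PiF[OF N F R] by (rule PiF_prob_space)
  have g: "(\<lambda>v. \<Sum>j\<in>UNIV. t v $ j) \<in> borel_measurable borel"
    using borel_measurable_integrable[OF True] by (simp add: sets_pistar cong: measurable_cong_sets)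
  have g1: "AE v in pistar TYPE('n) F f. (\<Sum>j\<in>UNIV. t v $ j) \<le> 1"
    using PiF_AE_cube[OF F pistar_in_PiF[OF N F R]]
    by eventually_elim (rule admissible_revenue_le_1[OF adm])
  have "ennreal (1 - (\<integral>x. x powr expo TYPE('n) \<partial>F))
      \<le> (\<integral>\<^sup>+v. ennreal (1 - (\<Sum>j\<in>UNIV. t v $ j)) \<partial>pistar TYPE('n) F f)"
    using nn_integral_pistar_revenue_shortfall[OF adm g] unfolding pistar_mass_vmax_lt_1 .
  also have "\<dots> = ennreal (1 - U t (pistar TYPE('n) F f))"
    using True g1 unfolding U_def
    by (subst nn_integral_eq_integral) (auto simp: Bochner_Integration.integral_diff prob_space)
  finally have "ennreal (1 - (\<integral>x. x powr expo TYPE('n) \<partial>F)) \<le> ennreal (1 - U t (pistar TYPE('n) F f))" .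
  moreover have "U t (pistar TYPE('n) F f) \<le> 1"
    unfolding U_def using g1 True by (intro integral_le_const) auto
  ultimately show ?thesis by (cases "(\<integral>x. x powr expo TYPE('n) \<partial>F) \<le> 1") (auto simp: ennreal_le_iff2)
qed

end

theorem theorem2:
  fixes F :: "real measure" and f :: "real \<Rightarrow> real"
  assumes N2: "CARD('n::finite) \<ge> 2"
    and F: "marginal_ok F f"
  shows "(regI TYPE('n) F f \<longrightarrow>
            admissible (qstar :: real^'n \<Rightarrow> real^'n) tstar
          \<and> pistar TYPE('n) F f \<in> PiF F
          \<and> (\<forall>\<pi>\<in>PiF F. U (tstar :: real^'n \<Rightarrow> real^'n) \<pi> \<ge> U tstar (pistar TYPE('n) F f))
          \<and> (\<forall>q t. admissible q t \<longrightarrow> U tstar (pistar TYPE('n) F f) \<ge> U t (pistar TYPE('n) F f))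
          \<and> (INF \<pi>\<in>PiF F. U (tstar :: real^'n \<Rightarrow> real^'n) \<pi>) = (\<integral>x. x powr expo TYPE('n) \<partial>F))
       \<and> (regII TYPE('n) F f \<longrightarrow> regI TYPE('n) F f)"
proof (intro conjI impI)
  assume R: "regI TYPE('n) F f"
  show "admissible (qstar :: real^'n \<Rightarrow> real^'n) tstar" by (rule admissible_star[OF N2])
  show "pistar TYPE('n) F f \<in> PiF F" by (rule pistar_in_PiF[OF N2 F R])
  show "\<forall>\<pi>\<in>PiF F. U (tstar :: real^'n \<Rightarrow> real^'n) \<pi> \<ge> U tstar (pistar TYPE('n) F f)"
    using U_tstar_ge[OF N2 F] U_tstar_pistar[OF N2 F R] by simp
  show "\<forall>q t. admissible q t \<longrightarrow> U tstar (pistar TYPE('n) F f) \<ge> U t (pistar TYPE('n) F f)"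
    using U_pistar_le[OF N2 F R] U_tstar_pistar[OF N2 F R] by simp
  show "(INF \<pi>\<in>PiF F. U (tstar :: real^'n \<Rightarrow> real^'n) \<pi>) = (\<integral>x. x powr expo TYPE('n) \<partial>F)"
    by (rule INF_U_tstar[OF N2 F R])
next
  assume "regII TYPE('n) F f"
  then show "regI TYPE('n) F f" by (rule regII_imp_regI[OF F N2])
qed

end
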